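(* Let $L$ be a multisorted algebra in the positive existential signature satisfying axioms (1), (2), (3), (7), (8), (9), (10). Let $\varphi$ be an almost morphism from $L$ to the positive existential algebra $A(W)$ of some set $W$. Then there is a set $W^+$ and a morphism $\varphi^+\colon L\to A(W^+)$ of positive existential algebras such that $\ker(\varphi^+)\subseteq\ker(\varphi)$. In particular, if $\varphi$ is injective on each sort, then $\varphi^+$ is an embedding.
   Context: The Boolean prime ideal theorem (equivalently, compactness) is assumed. Signature. There is a sort $n$ for each $n\ge0$. For every function $\alpha\colon\{1,\dots,n\}\to\{1,\dots,k\}$ there is a unary function symbol ("substitution") $\alpha\colon n\to k$ (argument of sort $n$, value of sort $k$). Each sort has $0,1,\vee,\wedge$; for each $n$ there is $\exists\colon n+1\to n$ (positive existential signature). For $\alpha\colon k\to n$, $\beta\colon n\to m$, $\beta\circ\alpha$ is the substitution symbol of the composite function. The associated cylindrification of $\exists\colon n+1\to n$ is $c\colon n\to n+1$, $c(i)=i$; $\exists^{(n)}$ is $n$-fold projection; $x\le y$ means $x=x\wedge y$. For a set $W$: $\alpha^{\mathrm{tuple}}(x_1,\dots,x_k)=(x_{\alpha(1)},\dots,x_{\alpha(n)})$, $\alpha^{\mathrm{relation}}(r)=\{\bar x\in W^k:\alpha^{\mathrm{tuple}}(\bar x)\in r\}$. The positive existential algebra $A(W)$ interprets sort $n$ as $\mathcal P(W^n)$, $\alpha$ as $\alpha^{\mathrm{relation}}$, $0,1,\vee,\wedge$ as $\emptyset,W^n,\cup,\cap$, and $\exists(r)=\{\bar x:\exists y\,(\bar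 x,y)\in r\}$. An almost morphism $\varphi\colon L\to A(W)$ is a sort-preserving family of maps commuting with all substitutions and with $0,1,\vee,\wedge$, and satisfying $\exists(\varphi(r))\subseteq\varphi(\exists(r))$. A morphism additionally commutes with $\exists$. For a map $f$, $\ker(f)=\{(a,a'): a,a' \text{ of the same sort}, f(a)=f(a')\}$. Axioms: (1) each sort is a bounded distributive lattice; (2) substitutions preserve $0,1,\vee,\wedge$; (3) $(\beta\circ\alpha)(r)=\beta(\alpha(r))$; (7) $\exists(0)=0$, $\exists(r\vee s)=\exists(r)\vee\exists(s)$; (8) $r\le c(\exists(r))$; (9) $\exists(r\wedge c(s))=\exists(r)\wedge s$; (10) for substitutions $\alpha_i\colon k_i\to m$ ($i=1,\dots,n$) and $\beta_i\colon k_i+1\to m+n$ with $\beta_i(j)=\alpha_i(j)$ for $j\le k_i$, $\beta_i(k_i+1)=m+i$: $\exists^{(n)}(\bigwedge_i\beta_i(r_i))=\bigwedge_i\alpha_i(\exists(r_i))$ for all $r_i$ of sort $k_i+1$. *)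

theory Defs
  imports Main "HOL-Library.FuncSet"
begin

text \<open>A substitution symbol alpha : n -> k is a function {1..n} -> {1..k}, represented
  extensionally (value undefined outside {1..n}).
  sb n k alpha : sort n -> sort k;  ex n : sort (n+1) -> sort n.\<close>

record 'a pe_alg =
  car :: "nat \<Rightarrow> 'a set"
  sb  :: "nat \<Rightarrow> nat \<Rightarrow> (nat \<Rightarrow> nat) \<Rightarrow> 'a \<Rightarrow> 'a"
  zr  :: "nat \<Rightarrow> 'a"
  on  :: "nat \<Rightarrow> 'a"
  jn  :: "nat \<Rightarrow> 'a \<Rightarrow> 'a \<Rightarrow> 'a"
  mt  :: "nat \<Rightarrow> 'a \<Rightarrow> 'a \<Rightarrow> 'a"
  ex  :: "nat \<Rightarrow> 'a \<Rightarrow> 'a"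

definition substs :: "nat \<Rightarrow> nat \<Rightarrow> (nat \<Rightarrow> nat) set" where
  "substs n k = {1..n} \<rightarrow>\<^sub>E {1..k}"

definition cyl :: "nat \<Rightarrow> nat \<Rightarrow> nat" where
  "cyl n = restrict id {1..n}"

definition le :: "('a, 'b) pe_alg_scheme \<Rightarrow> nat \<Rightarrow> 'a \<Rightarrow> 'a \<Rightarrow> bool" where
  "le L n x y \<longleftrightarrow> x = mt L n x y"

fun exn :: "('a, 'b) pe_alg_scheme \<Rightarrow> nat \<Rightarrow> nat \<Rightarrow> 'a \<Rightarrow> 'a" where
  "exn L m 0 r = r"
| "exn L m (Suc n) r = exn L m n (ex L (m + n) r)"

definition bigmeet :: "('a, 'b) pe_alg_scheme \<Rightarrow> nat \<Rightarrow> 'a list \<Rightarrow> 'a" where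
  "bigmeet L m xs = foldr (mt L m) xs (on L m)"

definition pe_closed :: "('a, 'b) pe_alg_scheme \<Rightarrow> bool" where
  "pe_closed L \<longleftrightarrow>
    (\<forall>n. zr L n \<in> car L n \<and> on L n \<in> car L n) \<and>
    (\<forall>n. \<forall>x\<in>car L n. \<forall>y\<in>car L n. jn L n x y \<in> car L n \<and> mt L n x y \<in> car L n) \<and>
    (\<forall>n k. \<forall>\<alpha>\<in>substs n k. \<forall>x\<in>car L n. sb L n k \<alpha> x \<in> car L k) \<and>
    (\<forall>n. \<forall>x\<in>car L (Suc n). ex L n x \<in> car L n)"

definition ax1 :: "('a, 'b) pe_alg_scheme \<Rightarrow> bool" where
  "ax1 L \<longleftrightarrow> (\<forall>n. \<forall>x\<in>car L n. \<forall>y\<in>car L n. \<forall>z\<in>car L n.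
      jn L n (jn L n x y) z = jn L n x (jn L n y z) \<and>
      mt L n (mt L n x y) z = mt L n x (mt L n y z) \<and>
      jn L n x y = jn L n y x \<and>
      mt L n x y = mt L n y x \<and>
      jn L n x (mt L n x y) = x \<and>
      mt L n x (jn L n x y) = x \<and>
      mt L n x (jn L n y z) = jn L n (mt L n x y) (mt L n x z) \<and>
      jn L n x (zr L n) = x \<and>
      mt L n x (on L n) = x)"

definition ax2 :: "('a, 'b) pe_alg_scheme \<Rightarrow> bool" where
  "ax2 L \<longleftrightarrow> (\<forall>n k. \<forall>\<alpha>\<in>substs n k.
      sb L n k \<alpha> (zr L n) = zr L k \<and> sb L n k \<alpha> (on L n) = on L k \<and>
      (\<forall>x\<in>car L n. \<forall>y\<in>car L n.
         sb L n k \<alpha> (jn L n x y) = jn L k (sb L n k \<alpha> x) (sb L n k \<alpha> y) \<and>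
         sb L n k \<alpha> (mt L n x y) = mt L k (sb L n k \<alpha> x) (sb L n k \<alpha> y)))"

definition ax3 :: "('a, 'b) pe_alg_scheme \<Rightarrow> bool" where
  "ax3 L \<longleftrightarrow> (\<forall>k n m. \<forall>\<alpha>\<in>substs k n. \<forall>\<beta>\<in>substs n m. \<forall>r\<in>car L k.
      sb L k m (compose {1..k} \<beta> \<alpha>) r = sb L n m \<beta> (sb L k n \<alpha> r))"

definition ax7 :: "('a, 'b) pe_alg_scheme \<Rightarrow> bool" where
  "ax7 L \<longleftrightarrow> (\<forall>n. ex L n (zr L (Suc n)) = zr L n \<and>
      (\<forall>r\<in>car L (Suc n). \<forall>s\<in>car L (Suc n).
         ex L n (jn L (Suc n) r s) = jn L n (ex L n r) (ex L n s)))"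

definition ax8 :: "('a, 'b) pe_alg_scheme \<Rightarrow> bool" where
  "ax8 L \<longleftrightarrow> (\<forall>n. \<forall>r\<in>car L (Suc n).
      le L (Suc n) r (sb L n (Suc n) (cyl n) (ex L n r)))"

definition ax9 :: "('a, 'b) pe_alg_scheme \<Rightarrow> bool" where
  "ax9 L \<longleftrightarrow> (\<forall>n. \<forall>r\<in>car L (Suc n). \<forall>s\<in>car L n.
      ex L n (mt L (Suc n) r (sb L n (Suc n) (cyl n) s)) = mt L n (ex L n r) s)"

definition ax10 :: "('a, 'b) pe_alg_scheme \<Rightarrow> bool" where
  "ax10 L \<longleftrightarrow> (\<forall>n m (k :: nat \<Rightarrow> nat) (\<alpha> :: nat \<Rightarrow> nat \<Rightarrow> nat) (\<beta> :: nat \<Rightarrow> nat \<Rightarrow> nat)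
       (r :: nat \<Rightarrow> 'a).
      (\<forall>i\<in>{1..n}. \<alpha> i \<in> substs (k i) m \<and> \<beta> i \<in> substs (Suc (k i)) (m + n) \<and>
          (\<forall>j\<in>{1..k i}. \<beta> i j = \<alpha> i j) \<and> \<beta> i (Suc (k i)) = m + i \<and>
          r i \<in> car L (Suc (k i)))
      \<longrightarrow> exn L m n (bigmeet L (m + n) (map (\<lambda>i. sb L (Suc (k i)) (m + n) (\<beta> i) (r i)) [1..<Suc n]))
          = bigmeet L m (map (\<lambda>i. sb L (k i) m (\<alpha> i) (ex L (k i) (r i))) [1..<Suc n]))"

definition pe_algebra :: "('a, 'b) pe_alg_scheme \<Rightarrow> bool" where
  "pe_algebra L \<longleftrightarrow> pe_closed L \<and> ax1 L \<and> ax2 L \<and> ax3 L \<and> ax7 L \<and> ax8 L \<and> ax9 L \<and> ax10 L"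

text \<open>W^n as lists of length n over W; tuple positions are 1-based (position i is xs ! (i-1)).\<close>
definition tuples :: "'w set \<Rightarrow> nat \<Rightarrow> 'w list set" where
  "tuples W n = {xs. length xs = n \<and> set xs \<subseteq> W}"

definition subst_tuple :: "nat \<Rightarrow> (nat \<Rightarrow> nat) \<Rightarrow> 'w list \<Rightarrow> 'w list" where
  "subst_tuple n \<alpha> xs = map (\<lambda>i. xs ! (\<alpha> i - 1)) [1..<Suc n]"

definition A :: "'w set \<Rightarrow> 'w list set pe_alg" where
  "A W = \<lparr> car = (\<lambda>n. Pow (tuples W n)),
           sb = (\<lambda>n k \<alpha> r. {xs \<in> tuples W k. subst_tuple n \<alpha> xs \<in> r}),
           zr = (\<lambda>n. {}),
           on = (\<lambda>n. tuples W n),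
           jn = (\<lambda>n. (\<union>)),
           mt = (\<lambda>n. (\<inter>)),
           ex = (\<lambda>n r. {xs \<in> tuples W n. \<exists>y\<in>W. xs @ [y] \<in> r}) \<rparr>"

definition hom_base :: "('a, 'b) pe_alg_scheme \<Rightarrow> 'w set \<Rightarrow> (nat \<Rightarrow> 'a \<Rightarrow> 'w list set) \<Rightarrow> bool" where
  "hom_base L W \<phi> \<longleftrightarrow>
    (\<forall>n. \<forall>a\<in>car L n. \<phi> n a \<in> car (A W) n) \<and>
    (\<forall>n k. \<forall>\<alpha>\<in>substs n k. \<forall>a\<in>car L n. \<phi> k (sb L n k \<alpha> a) = sb (A W) n k \<alpha> (\<phi> n a)) \<and>
    (\<forall>n. \<phi> n (zr L n) = zr (A W) n \<and> \<phi> n (on L n) = on (A W) n) \<and>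
    (\<forall>n. \<forall>a\<in>car L n. \<forall>b\<in>car L n.
        \<phi> n (jn L n a b) = jn (A W) n (\<phi> n a) (\<phi> n b) \<and>
        \<phi> n (mt L n a b) = mt (A W) n (\<phi> n a) (\<phi> n b))"

definition almost_morphism :: "('a, 'b) pe_alg_scheme \<Rightarrow> 'w set \<Rightarrow> (nat \<Rightarrow> 'a \<Rightarrow> 'w list set) \<Rightarrow> bool" where
  "almost_morphism L W \<phi> \<longleftrightarrow> hom_base L W \<phi> \<and>
    (\<forall>n. \<forall>r\<in>car L (Suc n). ex (A W) n (\<phi> (Suc n) r) \<subseteq> \<phi> n (ex L n r))"

definition morphism :: "('a, 'b) pe_alg_scheme \<Rightarrow> 'w set \<Rightarrow> (nat \<Rightarrow> 'a \<Rightarrow> 'w list set) \<Rightarrow> bool" where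
  "morphism L W \<phi> \<longleftrightarrow> hom_base L W \<phi> \<and>
    (\<forall>n. \<forall>r\<in>car L (Suc n). ex (A W) n (\<phi> (Suc n) r) = \<phi> n (ex L n r))"

definition ker :: "('a, 'b) pe_alg_scheme \<Rightarrow> (nat \<Rightarrow> 'a \<Rightarrow> 'c) \<Rightarrow> (nat \<times> 'a \<times> 'a) set" where
  "ker L \<phi> = {(n, a, a'). a \<in> car L n \<and> a' \<in> car L n \<and> \<phi> n a = \<phi> n a'}"

end

theory Submission
  imports Defs "HOL-Analysis.Function_Topology"
begin

text \<open>The points of \<open>W\<^sup>+\<close> are names, i.e.\ lists over the carrier of \<open>L\<close>: a Henkin name
  for every tuple of names \<open>us\<close> and every \<open>r\<close>, standing for a witness of \<open>\<exists>r\<close> at \<open>us\<close>, and a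
  base name for every entry of a \<open>W\<close>-tuple that separates two elements \<open>a\<close>, \<open>a'\<close> under \<open>\<phi>\<close>.
  The morphism is \<open>\<phi>\<^sup>+ n a = {us. T (us, a)}\<close> for a truth assignment \<open>T\<close> that respects meets,
  joins, substitutions and the Henkin witnesses, and agrees with \<open>\<phi>\<close> on base names; the last
  condition gives \<open>ker \<phi>\<^sup>+ \<subseteq> ker \<phi>\<close>. Each condition involves finitely many values of \<open>T\<close>,
  so by compactness it suffices to satisfy finitely many of them. For a finite set of names,
  enumerate the base names first and the Henkin names by increasing length. The type of the
  base names under \<open>\<phi>\<close> is a prime filter, and one extends it name by name, using
  cylindrification and the prime filter theorem, to a prime filter that contains each Henkin
  witness whose existential statement it already contains; the Frobenius law (9) makes each
  extension consistent. If \<open>\<phi>\<close> refutes \<open>\<exists>x. \<top>\<close>, then \<open>W\<close> is empty and an empty \<open>W\<^sup>+\<close> works.\<close>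

lemma closedin_finitely_determined:
  fixes P :: "('x \<Rightarrow> bool) \<Rightarrow> bool"
  assumes "finite I" and local: "\<And>f g. (\<And>x. x \<in> I \<Longrightarrow> f x = g x) \<Longrightarrow> P f = P g"
  shows "closedin (product_topology (\<lambda>_. discrete_topology UNIV) UNIV) {f. P f}"
    (is "closedin ?X _")
proof -
  have topX: "topspace ?X = UNIV" by auto
  have closed_coord: "closedin ?X {f. f x = b}" for x b
  proof -
    have "continuous_map ?X (discrete_topology UNIV) (\<lambda>f. f x)"
      by (rule continuous_map_product_projection) simp
    then have "closedin ?X {f \<in> topspace ?X. f x \<in> {b}}"
      by (rule closedin_continuous_map_preimage) simp
    then show ?thesis by (simp add: topX)
  qed
  have closed_cylinder: "closedin ?X {f. \<forall>x\<in>I. f x = g x}" for g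
  proof (cases "I = {}")
    case True
    then show ?thesis using closedin_topspace[of ?X] topX by simp
  next
    case False
    have "{f. \<forall>x\<in>I. f x = g x} = (\<Inter>x\<in>I. {f. f x = g x})" by auto
    then show ?thesis using False closed_coord by auto
  qed
  define G where "G = {g \<in> I \<rightarrow>\<^sub>E UNIV. P g}"
  have "{f. P f} = (\<Union>g\<in>G. {f. \<forall>x\<in>I. f x = g x})"
  proof (intro equalityI subsetI)
    fix f assume "f \<in> {f. P f}"
    then have "restrict f I \<in> G" using local[of "restrict f I" f] by (auto simp: G_def)
    then show "f \<in> (\<Union>g\<in>G. {f. \<forall>x\<in>I. f x = g x})" by (rule UN_I) simp
  next
    fix f assume "f \<in> (\<Union>g\<in>G. {f. \<forall>x\<in>I. f x = g x})"
    then obtain g where "g \<in> G" "\<And>x. x \<in> I \<Longrightarrow> f x = g x" by auto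
    then show "f \<in> {f. P f}" using local[of f g] by (simp add: G_def)
  qed
  moreover have "finite G"
    unfolding G_def using finite_PiE[OF \<open>finite I\<close>, of "\<lambda>_. UNIV :: bool set"] by simp
  ultimately show ?thesis using closed_cylinder by (auto intro: closedin_Union)
qed

lemma propositional_compactness:
  fixes C :: "'i set" and sat :: "'i \<Rightarrow> ('x \<Rightarrow> bool) \<Rightarrow> bool" and supp :: "'i \<Rightarrow> 'x set"
  assumes finite_supp: "\<And>i. i \<in> C \<Longrightarrow> finite (supp i)"
    and sat_local: "\<And>i f g. i \<in> C \<Longrightarrow> (\<And>x. x \<in> supp i \<Longrightarrow> f x = g x) \<Longrightarrow> sat i f = sat i g"
    and finitely_sat: "\<And>F. F \<subseteq> C \<Longrightarrow> finite F \<Longrightarrow> \<exists>f. \<forall>i\<in>F. sat i f"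
  shows "\<exists>f. \<forall>i\<in>C. sat i f"
proof -
  let ?X = "product_topology (\<lambda>_. discrete_topology UNIV) UNIV :: ('x \<Rightarrow> bool) topology"
  have "compact_space ?X"
    by (simp add: compact_space_product_topology compact_space_discrete_topology)
  moreover have "\<forall>K\<in>(\<lambda>i. {f. sat i f}) ` C. closedin ?X K"
  proof
    fix K assume "K \<in> (\<lambda>i. {f. sat i f}) ` C"
    then obtain i where i: "i \<in> C" and K: "K = {f. sat i f}" by blast
    show "closedin ?X K"
      unfolding K by (rule closedin_finitely_determined[OF finite_supp[OF i] sat_local[OF i]])
  qed
  moreover have "\<forall>\<F>. finite \<F> \<and> \<F> \<subseteq> (\<lambda>i. {f. sat i f}) ` C \<longrightarrow> \<Inter>\<F> \<noteq> {}"
  proof (intro allI impI)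
    fix \<F> assume "finite \<F> \<and> \<F> \<subseteq> (\<lambda>i. {f. sat i f}) ` C"
    then obtain F where "F \<subseteq> C" "finite F" "\<F> = (\<lambda>i. {f. sat i f}) ` F"
      by (meson finite_subset_image)
    then show "\<Inter>\<F> \<noteq> {}" using finitely_sat[of F] by blast
  qed
  ultimately have "\<Inter>((\<lambda>i. {f. sat i f}) ` C) \<noteq> {}"
    using compact_space_fip by blast
  then show ?thesis by auto
qed

locale distrib_lattice_on =
  fixes S :: "'a set" and meet join :: "'a \<Rightarrow> 'a \<Rightarrow> 'a" and bot top :: 'a
  assumes bot_closed: "bot \<in> S" and top_closed: "top \<in> S"
    and meet_closed: "x \<in> S \<Longrightarrow> y \<in> S \<Longrightarrow> meet x y \<in> S"
    and join_closed: "x \<in> S \<Longrightarrow> y \<in> S \<Longrightarrow> join x y \<in> S"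
    and join_assoc: "x \<in> S \<Longrightarrow> y \<in> S \<Longrightarrow> z \<in> S \<Longrightarrow> join (join x y) z = join x (join y z)"
    and meet_assoc: "x \<in> S \<Longrightarrow> y \<in> S \<Longrightarrow> z \<in> S \<Longrightarrow> meet (meet x y) z = meet x (meet y z)"
    and join_commute: "x \<in> S \<Longrightarrow> y \<in> S \<Longrightarrow> join x y = join y x"
    and meet_commute: "x \<in> S \<Longrightarrow> y \<in> S \<Longrightarrow> meet x y = meet y x"
    and join_meet_absorb: "x \<in> S \<Longrightarrow> y \<in> S \<Longrightarrow> join x (meet x y) = x"
    and meet_join_absorb: "x \<in> S \<Longrightarrow> y \<in> S \<Longrightarrow> meet x (join x y) = x"
    and meet_join_distrib: "x \<in> S \<Longrightarrow> y \<in> S \<Longrightarrow> z \<in> S \<Longrightarrow> meet x (join y z) = join (meet x y) (meet x z)"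
    and join_bot: "x \<in> S \<Longrightarrow> join x bot = x"
    and meet_top: "x \<in> S \<Longrightarrow> meet x top = x"
begin

definition leq :: "'a \<Rightarrow> 'a \<Rightarrow> bool" where
  "leq x y \<longleftrightarrow> x = meet x y"

lemma meet_idem: "x \<in> S \<Longrightarrow> meet x x = x"
  by (metis join_meet_absorb meet_join_absorb meet_closed)

lemma top_meet: "x \<in> S \<Longrightarrow> meet top x = x"
  using top_closed meet_commute meet_top by metis

lemma leq_refl: "x \<in> S \<Longrightarrow> leq x x"
  by (simp add: leq_def meet_idem)

lemma leq_trans: "x \<in> S \<Longrightarrow> y \<in> S \<Longrightarrow> z \<in> S \<Longrightarrow> leq x y \<Longrightarrow> leq y z \<Longrightarrow> leq x z"
  unfolding leq_def by (metis meet_assoc)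

lemma leq_top: "x \<in> S \<Longrightarrow> leq x top"
  by (simp add: leq_def meet_top)

lemma meet_leq1: "x \<in> S \<Longrightarrow> y \<in> S \<Longrightarrow> leq (meet x y) x"
  unfolding leq_def by (metis meet_assoc meet_commute meet_idem meet_closed)

lemma meet_leq2: "x \<in> S \<Longrightarrow> y \<in> S \<Longrightarrow> leq (meet x y) y"
  unfolding leq_def by (metis meet_assoc meet_idem meet_closed)

lemma meet_mono:
  assumes "a \<in> S" "b \<in> S" "c \<in> S" "d \<in> S" and "leq a b" "leq c d"
  shows "leq (meet a c) (meet b d)"
proof -
  have "meet (meet a c) (meet b d) = meet (meet a b) (meet c d)"
    using assms(1-4) by (metis meet_assoc meet_commute meet_closed)
  then show ?thesis using assms(5,6) unfolding leq_def by simp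
qed

lemma join_upper1: "x \<in> S \<Longrightarrow> y \<in> S \<Longrightarrow> leq x (join x y)"
  unfolding leq_def by (simp add: meet_join_absorb)

lemma join_upper2: "x \<in> S \<Longrightarrow> y \<in> S \<Longrightarrow> leq y (join x y)"
  unfolding leq_def by (metis join_commute meet_join_absorb)

lemma leq_iff_join_eq: "x \<in> S \<Longrightarrow> y \<in> S \<Longrightarrow> leq x y \<longleftrightarrow> join x y = y"
  unfolding leq_def by (metis join_meet_absorb join_commute meet_commute meet_join_absorb)

lemma join_least: "a \<in> S \<Longrightarrow> b \<in> S \<Longrightarrow> c \<in> S \<Longrightarrow> leq a c \<Longrightarrow> leq b c \<Longrightarrow> leq (join a b) c"
  by (simp add: leq_iff_join_eq join_assoc join_closed)

lemma meet_meet_distrib_left: "x \<in> S \<Longrightarrow> y \<in> S \<Longrightarrow> z \<in> S \<Longrightarrow> meet x (meet y z) = meet (meet x y) (meet x z)"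
  by (metis meet_assoc meet_commute meet_idem meet_closed)

lemma meet_meet_distrib_right: "x \<in> S \<Longrightarrow> y \<in> S \<Longrightarrow> z \<in> S \<Longrightarrow> meet (meet x y) z = meet (meet x z) (meet y z)"
  by (metis meet_assoc meet_commute meet_idem meet_closed)

lemma leq_bot: "x \<in> S \<Longrightarrow> leq bot x"
  by (metis leq_iff_join_eq bot_closed join_bot join_commute)

lemma join_mono:
  assumes "a \<in> S" "b \<in> S" "c \<in> S" "d \<in> S" and "leq a b" "leq c d"
  shows "leq (join a c) (join b d)"
  using assms join_least join_upper1 join_upper2 leq_trans join_closed by meson

definition is_filter :: "'a set \<Rightarrow> bool" where
  "is_filter F \<longleftrightarrow> F \<subseteq> S \<and> top \<in> F \<and> (\<forall>a\<in>F. \<forall>b\<in>S. leq a b \<longrightarrow> b \<in> F) \<and> (\<forall>a\<in>F. \<forall>b\<in>F. meet a b \<in> F)"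

definition is_ideal :: "'a set \<Rightarrow> bool" where
  "is_ideal J \<longleftrightarrow> J \<subseteq> S \<and> bot \<in> J \<and> (\<forall>a\<in>S. \<forall>b\<in>J. leq a b \<longrightarrow> a \<in> J) \<and> (\<forall>a\<in>J. \<forall>b\<in>J. join a b \<in> J)"

definition prime_filter :: "'a set \<Rightarrow> bool" where
  "prime_filter P \<longleftrightarrow> P \<subseteq> S \<and> top \<in> P \<and> bot \<notin> P \<and>
     (\<forall>a\<in>S. \<forall>b\<in>S. meet a b \<in> P \<longleftrightarrow> a \<in> P \<and> b \<in> P) \<and>
     (\<forall>a\<in>S. \<forall>b\<in>S. join a b \<in> P \<longleftrightarrow> a \<in> P \<or> b \<in> P)"

lemma is_filterI:
  "F \<subseteq> S \<Longrightarrow> top \<in> F \<Longrightarrow> (\<And>a b. a \<in> F \<Longrightarrow> b \<in> S \<Longrightarrow> leq a b \<Longrightarrow> b \<in> F) \<Longrightarrow>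
   (\<And>a b. a \<in> F \<Longrightarrow> b \<in> F \<Longrightarrow> meet a b \<in> F) \<Longrightarrow> is_filter F"
  by (simp add: is_filter_def)

lemma prime_filter_upward: "prime_filter P \<Longrightarrow> a \<in> P \<Longrightarrow> b \<in> S \<Longrightarrow> leq a b \<Longrightarrow> b \<in> P"
  unfolding prime_filter_def leq_def by (metis subsetD)

lemma filter_upward_closure:
  assumes BS: "B \<subseteq> S" and "b\<^sub>0 \<in> B"
    and directed: "\<And>a b. a \<in> B \<Longrightarrow> b \<in> B \<Longrightarrow> \<exists>c\<in>B. leq c (meet a b)"
  shows "is_filter {x \<in> S. \<exists>b\<in>B. leq b x}" (is "is_filter ?F")
proof (rule is_filterI)
  show "?F \<subseteq> S" by blast
  show "top \<in> ?F" using \<open>b\<^sub>0 \<in> B\<close> leq_top[of b\<^sub>0] BS top_closed by blast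
  show "y \<in> ?F" if x: "x \<in> ?F" and y: "y \<in> S" and "leq x y" for x y
  proof -
    obtain b where b: "b \<in> B" "x \<in> S" "leq b x" using x by blast
    then have "leq b y" using leq_trans[of b x y] BS y \<open>leq x y\<close> by blast
    then show ?thesis using b(1) y by blast
  qed
  show "meet x y \<in> ?F" if "x \<in> ?F" "y \<in> ?F" for x y
  proof -
    obtain b b' where b: "b \<in> B" "b' \<in> B" "x \<in> S" "y \<in> S" "leq b x" "leq b' y"
      using \<open>x \<in> ?F\<close> \<open>y \<in> ?F\<close> by blast
    obtain c where c: "c \<in> B" "leq c (meet b b')" using directed[OF b(1,2)] by blast
    have S: "b \<in> S" "b' \<in> S" "c \<in> S" using b(1,2) c(1) BS by blast+
    have "leq (meet b b') (meet x y)" using meet_mono[OF S(1) b(3) S(2) b(4) b(5,6)] .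
    then have "leq c (meet x y)"
      using leq_trans[OF S(3) meet_closed[OF S(1,2)] meet_closed[OF b(3,4)] c(2)] by blast
    then show ?thesis using c(1) meet_closed[OF b(3,4)] by blast
  qed
qed

lemma ideal_downward_closure:
  assumes BS: "B \<subseteq> S" and "b\<^sub>0 \<in> B"
    and directed: "\<And>a b. a \<in> B \<Longrightarrow> b \<in> B \<Longrightarrow> \<exists>c\<in>B. leq (join a b) c"
  shows "is_ideal {x \<in> S. \<exists>b\<in>B. leq x b}" (is "is_ideal ?J")
  unfolding is_ideal_def
proof (intro conjI ballI impI)
  show "?J \<subseteq> S" by blast
  show "bot \<in> ?J" using \<open>b\<^sub>0 \<in> B\<close> leq_bot[of b\<^sub>0] BS bot_closed by blast
  show "x \<in> ?J" if x: "x \<in> S" and y: "y \<in> ?J" and "leq x y" for x y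
  proof -
    obtain b where b: "b \<in> B" "y \<in> S" "leq y b" using y by blast
    then have "leq x b" using leq_trans[of x y b] BS x \<open>leq x y\<close> by blast
    then show ?thesis using b(1) x by blast
  qed
  show "join x y \<in> ?J" if "x \<in> ?J" "y \<in> ?J" for x y
  proof -
    obtain b b' where b: "b \<in> B" "b' \<in> B" "x \<in> S" "y \<in> S" "leq x b" "leq y b'"
      using \<open>x \<in> ?J\<close> \<open>y \<in> ?J\<close> by blast
    obtain c where c: "c \<in> B" "leq (join b b') c" using directed[OF b(1,2)] by blast
    have S: "b \<in> S" "b' \<in> S" "c \<in> S" using b(1,2) c(1) BS by blast+
    have "leq (join x y) (join b b')" using join_mono[OF b(3) S(1) b(4) S(2) b(5,6)] .
    then have "leq (join x y) c"
      using leq_trans[OF join_closed[OF b(3,4)] join_closed[OF S(1,2)] S(3) _ c(2)] by blast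
    then show ?thesis using c(1) join_closed[OF b(3,4)] by blast
  qed
qed

lemma maximal_filter_meets_ideal:
  assumes P: "is_filter P" and J: "is_ideal J"
    and max: "\<And>Q. is_filter Q \<Longrightarrow> P \<subseteq> Q \<Longrightarrow> Q \<inter> J = {} \<Longrightarrow> Q = P"
    and a: "a \<in> S" "a \<notin> P"
  shows "\<exists>p\<in>P. meet p a \<in> J"
proof (rule ccontr)
  assume none: "\<not> (\<exists>p\<in>P. meet p a \<in> J)"
  have PS: "P \<subseteq> S" and Ptop: "top \<in> P" and Pmeet: "\<And>p q. p \<in> P \<Longrightarrow> q \<in> P \<Longrightarrow> meet p q \<in> P"
    using P unfolding is_filter_def by auto
  define Q where "Q = {x \<in> S. \<exists>b\<in>(\<lambda>p. meet p a) ` P. leq b x}"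
  have "is_filter Q" unfolding Q_def
  proof (rule filter_upward_closure)
    show "(\<lambda>p. meet p a) ` P \<subseteq> S" using PS a(1) meet_closed by blast
    show "meet top a \<in> (\<lambda>p. meet p a) ` P" using Ptop by blast
    show "\<exists>c\<in>(\<lambda>p. meet p a) ` P. leq c (meet x y)"
      if xy: "x \<in> (\<lambda>p. meet p a) ` P" "y \<in> (\<lambda>p. meet p a) ` P" for x y
    proof -
      obtain p q where "p \<in> P" "q \<in> P" "x = meet p a" "y = meet q a" using xy by blast
      moreover have "p \<in> S" "q \<in> S" using \<open>p \<in> P\<close> \<open>q \<in> P\<close> PS by blast+
      ultimately have "meet (meet p q) a = meet x y" "meet x y \<in> S" "meet p q \<in> P"
        using meet_meet_distrib_right[of p q a] Pmeet[of p q] a(1) meet_closed by auto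
      then show ?thesis using leq_refl[of "meet x y"] by (metis image_eqI)
    qed
  qed
  moreover have "P \<subseteq> Q"
  proof
    fix p assume "p \<in> P"
    then show "p \<in> Q" unfolding Q_def using PS a(1) meet_leq1[of p a] by blast
  qed
  moreover have "Q \<inter> J = {}"
  proof (rule ccontr)
    assume "Q \<inter> J \<noteq> {}"
    then obtain x p where "x \<in> J" "x \<in> S" "p \<in> P" "leq (meet p a) x" unfolding Q_def by blast
    then have "meet p a \<in> J" using J PS a(1) meet_closed unfolding is_ideal_def by blast
    with none \<open>p \<in> P\<close> show False by blast
  qed
  moreover have "a \<in> Q"
    unfolding Q_def using a(1) top_meet[OF a(1)] leq_refl[OF a(1)] by (auto intro: bexI[OF _ Ptop])
  ultimately show False using max a(2) by blast
qed

lemma maximal_filter_prime: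
  assumes P: "is_filter P" and J: "is_ideal J" and disj: "P \<inter> J = {}"
    and max: "\<And>Q. is_filter Q \<Longrightarrow> P \<subseteq> Q \<Longrightarrow> Q \<inter> J = {} \<Longrightarrow> Q = P"
  shows "prime_filter P"
proof -
  have PS: "P \<subseteq> S" and Pup: "\<And>a b. a \<in> P \<Longrightarrow> b \<in> S \<Longrightarrow> leq a b \<Longrightarrow> b \<in> P"
    and Pmeet: "\<And>a b. a \<in> P \<Longrightarrow> b \<in> P \<Longrightarrow> meet a b \<in> P"
    using P unfolding is_filter_def by auto
  have Jdown: "\<And>a b. a \<in> S \<Longrightarrow> b \<in> J \<Longrightarrow> leq a b \<Longrightarrow> a \<in> J"
    and Jjoin: "\<And>a b. a \<in> J \<Longrightarrow> b \<in> J \<Longrightarrow> join a b \<in> J"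
    using J unfolding is_ideal_def by auto
  have join_prime: "a \<in> P \<or> b \<in> P" if ab: "a \<in> S" "b \<in> S" and jab: "join a b \<in> P" for a b
  proof (rule ccontr)
    assume "\<not> (a \<in> P \<or> b \<in> P)"
    then obtain p q where pq: "p \<in> P" "meet p a \<in> J" "q \<in> P" "meet q b \<in> J"
      using maximal_filter_meets_ideal[OF P J max] ab by blast
    define r where "r = meet p q"
    have r: "r \<in> P" "r \<in> S" "p \<in> S" "q \<in> S" using pq Pmeet PS unfolding r_def by auto
    have rpq: "leq r p" "leq r q" unfolding r_def using r by (simp_all add: meet_leq1 meet_leq2)
    have "leq (meet r a) (meet p a)"
      using meet_mono[OF r(2,3) ab(1) ab(1) rpq(1) leq_refl[OF ab(1)]] .
    then have "meet r a \<in> J" using Jdown pq(2) r(2) ab(1) meet_closed by blast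
    have "leq (meet r b) (meet q b)"
      using meet_mono[OF r(2,4) ab(2) ab(2) rpq(2) leq_refl[OF ab(2)]] .
    then have "meet r b \<in> J" using Jdown pq(4) r(2) ab(2) meet_closed by blast
    with \<open>meet r a \<in> J\<close> have "meet r (join a b) \<in> J" using Jjoin meet_join_distrib r ab by simp
    moreover have "meet r (join a b) \<in> P" using Pmeet r jab by simp
    ultimately show False using disj by blast
  qed
  show ?thesis unfolding prime_filter_def
  proof (intro conjI ballI)
    show "P \<subseteq> S" by (fact PS)
    show "top \<in> P" using P unfolding is_filter_def by blast
    show "bot \<notin> P" using disj J unfolding is_ideal_def by blast
    fix a b assume ab: "a \<in> S" "b \<in> S"
    show "meet a b \<in> P \<longleftrightarrow> a \<in> P \<and> b \<in> P"
      using Pup[OF _ ab(1) meet_leq1[OF ab]] Pup[OF _ ab(2) meet_leq2[OF ab]] Pmeet by blast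
    show "join a b \<in> P \<longleftrightarrow> a \<in> P \<or> b \<in> P"
      using join_prime[OF ab] Pup[OF _ join_closed[OF ab] join_upper1[OF ab]]
        Pup[OF _ join_closed[OF ab] join_upper2[OF ab]] by blast
  qed
qed

theorem prime_filter_separation:
  assumes G: "is_filter G" and J: "is_ideal J" and disj: "G \<inter> J = {}"
  shows "\<exists>P. prime_filter P \<and> G \<subseteq> P \<and> P \<inter> J = {}"
proof -
  define \<A> where "\<A> = {F. is_filter F \<and> G \<subseteq> F \<and> F \<inter> J = {}}"
  have "\<Union>\<C> \<in> \<A>" if "\<C> \<noteq> {}" and ch: "subset.chain \<A> \<C>" for \<C>
  proof -
    have \<C>: "\<And>F. F \<in> \<C> \<Longrightarrow> is_filter F \<and> G \<subseteq> F \<and> F \<inter> J = {}"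
      using ch unfolding subset.chain_def \<A>_def by blast
    have "is_filter (\<Union>\<C>)"
    proof (rule is_filterI)
      show "\<Union>\<C> \<subseteq> S" using \<C> unfolding is_filter_def by blast
      show "top \<in> \<Union>\<C>" using \<C> \<open>\<C> \<noteq> {}\<close> unfolding is_filter_def by blast
      show "b \<in> \<Union>\<C>" if "a \<in> \<Union>\<C>" "b \<in> S" "leq a b" for a b
        using that \<C> unfolding is_filter_def by blast
      show "meet a b \<in> \<Union>\<C>" if "a \<in> \<Union>\<C>" "b \<in> \<Union>\<C>" for a b
      proof -
        obtain F F' where F: "F \<in> \<C>" "a \<in> F" "F' \<in> \<C>" "b \<in> F'"
          using \<open>a \<in> \<Union>\<C>\<close> \<open>b \<in> \<Union>\<C>\<close> by blast
        then obtain H where "H \<in> \<C>" "a \<in> H" "b \<in> H"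
          using ch unfolding subset.chain_def by blast
        then show ?thesis using \<C>[of H] unfolding is_filter_def by blast
      qed
    qed
    then show ?thesis using \<C> \<open>\<C> \<noteq> {}\<close> unfolding \<A>_def by blast
  qed
  moreover have "G \<in> \<A>" using G disj unfolding \<A>_def by blast
  ultimately obtain P where "P \<in> \<A>" and max: "\<forall>Q\<in>\<A>. P \<subseteq> Q \<longrightarrow> Q = P"
    using subset_Zorn_nonempty[of \<A>] by blast
  have "prime_filter P"
  proof (rule maximal_filter_prime[OF _ J])
    show "is_filter P" "P \<inter> J = {}" using \<open>P \<in> \<A>\<close> unfolding \<A>_def by auto
    show "Q = P" if "is_filter Q" "P \<subseteq> Q" "Q \<inter> J = {}" for Q
      using max that \<open>P \<in> \<A>\<close> unfolding \<A>_def by blast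
  qed
  then show ?thesis using \<open>P \<in> \<A>\<close> unfolding \<A>_def by blast
qed

end

lemma substs_apply: "\<alpha> \<in> substs n k \<Longrightarrow> i \<in> {1..n} \<Longrightarrow> \<alpha> i \<in> {1..k}"
  unfolding substs_def by auto

lemma cyl_substs: "cyl n \<in> substs n (Suc n)"
  unfolding substs_def cyl_def by auto

lemma tuples_UNIV: "tuples UNIV n = {xs. length xs = n}"
  unfolding tuples_def by auto

lemma tuples_0 [simp]: "tuples W 0 = {[]}"
  unfolding tuples_def by auto

lemma tuples_empty: "tuples {} n = (if n = 0 then {[]} else {})"
  unfolding tuples_def by auto

lemma length_subst_tuple [simp]: "length (subst_tuple n \<alpha> xs) = n"
  unfolding subst_tuple_def by simp

lemma nth_subst_tuple: "i < n \<Longrightarrow> subst_tuple n \<alpha> xs ! i = xs ! (\<alpha> (Suc i) - 1)"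
  unfolding subst_tuple_def by (simp del: upt_Suc)

lemma subst_tuple_cyl: "length xs = n \<Longrightarrow> subst_tuple n (cyl n) (xs @ [y]) = xs"
  by (rule nth_equalityI) (auto simp: nth_subst_tuple cyl_def nth_append)

lemma incl_substs: "j \<le> j' \<Longrightarrow> restrict id {1..j} \<in> substs j j'"
  unfolding substs_def by auto

lemma A_simps:
  "car (A W) n = Pow (tuples W n)"
  "sb (A W) n k \<alpha> r = {xs \<in> tuples W k. subst_tuple n \<alpha> xs \<in> r}"
  "zr (A W) n = {}" "on (A W) n = tuples W n" "jn (A W) n x y = x \<union> y" "mt (A W) n x y = x \<inter> y"
  "ex (A W) n r = {xs \<in> tuples W n. \<exists>y\<in>W. xs @ [y] \<in> r}"
  by (simp_all add: A_def)

locale positive_existential_algebra =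
  fixes L :: "'a pe_alg"
  assumes pe_algebra: "pe_algebra L"
begin

lemma zr_closed [simp]: "zr L n \<in> car L n"
  and on_closed [simp]: "on L n \<in> car L n"
  and mt_closed [simp]: "x \<in> car L n \<Longrightarrow> y \<in> car L n \<Longrightarrow> mt L n x y \<in> car L n"
  and jn_closed [simp]: "x \<in> car L n \<Longrightarrow> y \<in> car L n \<Longrightarrow> jn L n x y \<in> car L n"
  and sb_closed [simp]: "\<alpha> \<in> substs n k \<Longrightarrow> x \<in> car L n \<Longrightarrow> sb L n k \<alpha> x \<in> car L k"
  and ex_closed [simp]: "x \<in> car L (Suc n) \<Longrightarrow> ex L n x \<in> car L n"
  using pe_algebra unfolding pe_algebra_def pe_closed_def by auto

lemma lattice_laws:
  assumes "x \<in> car L n" "y \<in> car L n" "z \<in> car L n"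
  shows "jn L n (jn L n x y) z = jn L n x (jn L n y z)" "mt L n (mt L n x y) z = mt L n x (mt L n y z)"
    "jn L n x y = jn L n y x" "mt L n x y = mt L n y x"
    "jn L n x (mt L n x y) = x" "mt L n x (jn L n x y) = x"
    "mt L n x (jn L n y z) = jn L n (mt L n x y) (mt L n x z)"
    "jn L n x (zr L n) = x" "mt L n x (on L n) = x"
  using pe_algebra assms unfolding pe_algebra_def ax1_def by blast+

sublocale sort: distrib_lattice_on "car L n" "mt L n" "jn L n" "zr L n" "on L n" for n
  by unfold_locales (meson lattice_laws zr_closed on_closed mt_closed jn_closed)+

lemma sort_leq_eq_le: "sort.leq n = le L n"
  by (simp add: sort.leq_def le_def fun_eq_iff)

abbreviation cylinder :: "nat \<Rightarrow> 'a \<Rightarrow> 'a" where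
  "cylinder n \<equiv> sb L n (Suc n) (cyl n)"

lemma sb_zr: "\<alpha> \<in> substs n k \<Longrightarrow> sb L n k \<alpha> (zr L n) = zr L k"
  and sb_on: "\<alpha> \<in> substs n k \<Longrightarrow> sb L n k \<alpha> (on L n) = on L k"
  and sb_jn: "\<alpha> \<in> substs n k \<Longrightarrow> x \<in> car L n \<Longrightarrow> y \<in> car L n \<Longrightarrow>
    sb L n k \<alpha> (jn L n x y) = jn L k (sb L n k \<alpha> x) (sb L n k \<alpha> y)"
  and sb_mt: "\<alpha> \<in> substs n k \<Longrightarrow> x \<in> car L n \<Longrightarrow> y \<in> car L n \<Longrightarrow>
    sb L n k \<alpha> (mt L n x y) = mt L k (sb L n k \<alpha> x) (sb L n k \<alpha> y)"
  using pe_algebra unfolding pe_algebra_def ax2_def by auto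

lemma sb_compose:
  "\<alpha> \<in> substs k n \<Longrightarrow> \<beta> \<in> substs n m \<Longrightarrow> r \<in> car L k \<Longrightarrow>
   sb L k m (compose {1..k} \<beta> \<alpha>) r = sb L n m \<beta> (sb L k n \<alpha> r)"
  using pe_algebra unfolding pe_algebra_def ax3_def by auto

lemma ex_jn: "r \<in> car L (Suc n) \<Longrightarrow> s \<in> car L (Suc n) \<Longrightarrow>
    ex L n (jn L (Suc n) r s) = jn L n (ex L n r) (ex L n s)"
  using pe_algebra unfolding pe_algebra_def ax7_def by auto

lemma leq_cylinder_ex: "r \<in> car L (Suc n) \<Longrightarrow> sort.leq (Suc n) r (cylinder n (ex L n r))"
  using pe_algebra unfolding pe_algebra_def ax8_def by (simp add: sort_leq_eq_le)

lemma ex_mt_cylinder: "r \<in> car L (Suc n) \<Longrightarrow> s \<in> car L n \<Longrightarrow>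
   ex L n (mt L (Suc n) r (cylinder n s)) = mt L n (ex L n r) s"
  using pe_algebra unfolding pe_algebra_def ax9_def by auto

lemma ex_mono:
  assumes "x \<in> car L (Suc n)" "y \<in> car L (Suc n)" "sort.leq (Suc n) x y"
  shows "sort.leq n (ex L n x) (ex L n y)"
  using assms by (simp add: sort.leq_iff_join_eq flip: ex_jn)

lemma ex_cylinder_leq: "b \<in> car L n \<Longrightarrow> sort.leq n (ex L n (cylinder n b)) b"
  using ex_mt_cylinder[where n=n and r="on L (Suc n)" and s=b] sort.meet_leq2[where n=n and x="ex L n (on L (Suc n))" and y=b]
  by (simp add: cyl_substs sort.top_meet)

text \<open>The substitution \<open>\<beta>\<close> of axiom (10) for a single formula.\<close>
definition subst_extend :: "(nat \<Rightarrow> nat) \<Rightarrow> nat \<Rightarrow> nat \<Rightarrow> nat \<Rightarrow> nat" where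
  "subst_extend \<sigma> k j = restrict (\<lambda>i. if i \<le> k then \<sigma> i else Suc j) {1..Suc k}"

lemma subst_extend_substs: "\<sigma> \<in> substs k j \<Longrightarrow> subst_extend \<sigma> k j \<in> substs (Suc k) (Suc j)"
  unfolding substs_def subst_extend_def by (auto simp: PiE_def Pi_def)

lemma ex_sb_subst_extend:
  assumes \<sigma>: "\<sigma> \<in> substs k j" and r: "r \<in> car L (Suc k)"
  shows "ex L j (sb L (Suc k) (Suc j) (subst_extend \<sigma> k j) r) = sb L k j \<sigma> (ex L k r)"
proof -
  have "ax10 L" using pe_algebra unfolding pe_algebra_def by blast
  from this[unfolded ax10_def, rule_format,
      where n=1 and m=j and k="\<lambda>_. k" and \<alpha>="\<lambda>_. \<sigma>" and \<beta>="\<lambda>_. subst_extend \<sigma> k j" and r="\<lambda>_. r"]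
  show ?thesis
    using \<sigma> r subst_extend_substs[OF \<sigma>]
    by (simp add: bigmeet_def subst_extend_def sort.meet_top)
qed

lemma ex_on_cylinder: "ex L (Suc j) (on L (Suc (Suc j))) = cylinder j (ex L j (on L (Suc j)))"
  using ex_sb_subst_extend[OF cyl_substs on_closed]
  by (simp add: sb_on subst_extend_substs[OF cyl_substs])

lemma cylinder_closed: "a \<in> car L j \<Longrightarrow> cylinder j a \<in> car L (Suc j)"
  by (simp add: cyl_substs)

definition lift_filter :: "nat \<Rightarrow> 'a \<Rightarrow> 'a set \<Rightarrow> 'a set" where
  "lift_filter j s P =
     {x \<in> car L (Suc j). \<exists>b\<in>(\<lambda>a. mt L (Suc j) s (cylinder j a)) ` P. sort.leq (Suc j) b x}"

definition lift_ideal :: "nat \<Rightarrow> 'a set \<Rightarrow> 'a set" where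
  "lift_ideal j P = {x \<in> car L (Suc j). \<exists>b\<in>cylinder j ` (car L j - P). sort.leq (Suc j) x b}"

lemma lift_filter_is_filter:
  assumes P: "sort.prime_filter j P" and s: "s \<in> car L (Suc j)"
  shows "sort.is_filter (Suc j) (lift_filter j s P)"
  unfolding lift_filter_def
proof (rule sort.filter_upward_closure)
  have PS: "P \<subseteq> car L j" and Pon: "on L j \<in> P"
    and Pmt: "\<And>a b. a \<in> car L j \<Longrightarrow> b \<in> car L j \<Longrightarrow> mt L j a b \<in> P \<longleftrightarrow> a \<in> P \<and> b \<in> P"
    using P unfolding sort.prime_filter_def by auto
  show B: "(\<lambda>a. mt L (Suc j) s (cylinder j a)) ` P \<subseteq> car L (Suc j)"
    using PS s cylinder_closed by auto
  show "mt L (Suc j) s (cylinder j (on L j)) \<in> (\<lambda>a. mt L (Suc j) s (cylinder j a)) ` P"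
    using Pon by blast
  fix x y assume xy: "x \<in> (\<lambda>a. mt L (Suc j) s (cylinder j a)) ` P" "y \<in> (\<lambda>a. mt L (Suc j) s (cylinder j a)) ` P"
  then obtain a b where ab: "a \<in> P" "b \<in> P" "x = mt L (Suc j) s (cylinder j a)" "y = mt L (Suc j) s (cylinder j b)"
    by blast
  have S: "a \<in> car L j" "b \<in> car L j" using ab PS by blast+
  have "mt L (Suc j) s (cylinder j (mt L j a b)) = mt L (Suc j) x y"
    using sort.meet_meet_distrib_left[OF s cylinder_closed cylinder_closed, of a b] ab(3,4) S
      sb_mt[OF cyl_substs S] by simp
  moreover have "mt L j a b \<in> P" using Pmt S ab by blast
  moreover have "mt L (Suc j) x y \<in> car L (Suc j)"
    using xy B mt_closed[of x "Suc j" y] by blast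
  ultimately show "\<exists>c\<in>(\<lambda>a. mt L (Suc j) s (cylinder j a)) ` P. sort.leq (Suc j) c (mt L (Suc j) x y)"
    using sort.leq_refl[where n="Suc j" and x="mt L (Suc j) x y"] by (metis image_eqI)
qed

lemma lift_ideal_is_ideal:
  assumes P: "sort.prime_filter j P"
  shows "sort.is_ideal (Suc j) (lift_ideal j P)"
  unfolding lift_ideal_def
proof (rule sort.ideal_downward_closure)
  have Pzr: "zr L j \<notin> P"
    and Pjn: "\<And>a b. a \<in> car L j \<Longrightarrow> b \<in> car L j \<Longrightarrow> jn L j a b \<in> P \<longleftrightarrow> a \<in> P \<or> b \<in> P"
    using P unfolding sort.prime_filter_def by auto
  show "cylinder j ` (car L j - P) \<subseteq> car L (Suc j)" using cylinder_closed by auto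
  show "cylinder j (zr L j) \<in> cylinder j ` (car L j - P)" using Pzr zr_closed by blast
  fix x y assume "x \<in> cylinder j ` (car L j - P)" "y \<in> cylinder j ` (car L j - P)"
  then obtain a b where ab: "a \<in> car L j" "a \<notin> P" "b \<in> car L j" "b \<notin> P" "x = cylinder j a" "y = cylinder j b"
    by blast
  then have "jn L (Suc j) x y = cylinder j (jn L j a b)" "jn L j a b \<in> car L j - P"
    using sb_jn[OF cyl_substs] Pjn by auto
  then show "\<exists>c\<in>cylinder j ` (car L j - P). sort.leq (Suc j) (jn L (Suc j) x y) c"
    using sort.leq_refl[where n="Suc j"] cylinder_closed by (metis Diff_iff image_eqI)
qed

text \<open>This is where the Frobenius law (9) enters: \<open>s \<and> c(a) \<le> c(b)\<close> forces
  \<open>\<exists>s \<and> a = \<exists>(s \<and> c(a)) \<le> \<exists>c(b) \<le> b\<close>.\<close>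

lemma lift_filter_disjoint:
  assumes P: "sort.prime_filter j P" and s: "s \<in> car L (Suc j)" and es: "ex L j s \<in> P"
  shows "lift_filter j s P \<inter> lift_ideal j P = {}"
proof (rule ccontr)
  assume "lift_filter j s P \<inter> lift_ideal j P \<noteq> {}"
  then obtain x a b where x: "x \<in> car L (Suc j)" "a \<in> P" "b \<in> car L j" "b \<notin> P"
    and le: "sort.leq (Suc j) (mt L (Suc j) s (cylinder j a)) x" "sort.leq (Suc j) x (cylinder j b)"
    unfolding lift_filter_def lift_ideal_def by blast
  have a: "a \<in> car L j" using x(2) P unfolding sort.prime_filter_def by blast
  have "sort.leq (Suc j) (mt L (Suc j) s (cylinder j a)) (cylinder j b)"
    using sort.leq_trans[OF _ x(1) cylinder_closed[OF x(3)] le] s cylinder_closed[OF a] by simp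
  then have "sort.leq j (ex L j (mt L (Suc j) s (cylinder j a))) (ex L j (cylinder j b))"
    using ex_mono s cylinder_closed[OF a] cylinder_closed[OF x(3)] by simp
  then have "sort.leq j (mt L j (ex L j s) a) (ex L j (cylinder j b))"
    using ex_mt_cylinder[OF s a] by simp
  then have "sort.leq j (mt L j (ex L j s) a) b"
    using sort.leq_trans[OF _ _ x(3) _ ex_cylinder_leq[OF x(3)]] s a cylinder_closed[OF x(3)] by simp
  moreover have "mt L j (ex L j s) a \<in> P"
    using P es x(2) s a unfolding sort.prime_filter_def by simp
  ultimately show False using sort.prime_filter_upward[OF P] x(3,4) by blast
qed

lemma prime_filter_lift:
  assumes P: "sort.prime_filter j P" and s: "s \<in> car L (Suc j)" and es: "ex L j s \<in> P"
  shows "\<exists>Q. sort.prime_filter (Suc j) Q \<and> (\<forall>a\<in>car L j. a \<in> P \<longleftrightarrow> cylinder j a \<in> Q) \<and> s \<in> Q"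
proof -
  obtain Q where Q: "sort.prime_filter (Suc j) Q" "lift_filter j s P \<subseteq> Q" "Q \<inter> lift_ideal j P = {}"
    using sort.prime_filter_separation[OF lift_filter_is_filter[OF P s] lift_ideal_is_ideal[OF P]
        lift_filter_disjoint[OF P s es]] by blast
  have PS: "P \<subseteq> car L j" and Pon: "on L j \<in> P" using P unfolding sort.prime_filter_def by auto
  have "cylinder j a \<in> lift_filter j s P" if "a \<in> P" for a
  proof -
    have a: "a \<in> car L j" using that PS by blast
    show ?thesis
      using that sort.meet_leq2[OF s cylinder_closed[OF a]] cylinder_closed[OF a]
      unfolding lift_filter_def by blast
  qed
  moreover have "cylinder j a \<in> lift_ideal j P" if "a \<in> car L j" "a \<notin> P" for a
    using that cylinder_closed sort.leq_refl[OF cylinder_closed] unfolding lift_ideal_def by blast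
  moreover have "s \<in> lift_filter j s P"
  proof -
    have "mt L (Suc j) s (cylinder j (on L j)) = s" by (simp add: sb_on cyl_substs sort.meet_top s)
    then have "s \<in> (\<lambda>a. mt L (Suc j) s (cylinder j a)) ` P" using Pon by (metis image_eqI)
    then show ?thesis unfolding lift_filter_def using s sort.leq_refl[OF s] by blast
  qed
  ultimately show ?thesis using Q by blast
qed

end

text \<open>\<open>henkin_name e\<^sub>0 e\<^sub>1 us r\<close> and \<open>base_name e\<^sub>0 e\<^sub>1 n a a' i\<close> are the Henkin and base names
  described at the top; the two letters \<open>e\<^sub>0 \<noteq> e\<^sub>1\<close> make the encodings injective and
  disjoint.\<close>

fun enc_list :: "'a \<Rightarrow> 'a \<Rightarrow> 'a list \<Rightarrow> 'a list" where
  "enc_list e\<^sub>0 e\<^sub>1 [] = [e\<^sub>0]"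
| "enc_list e\<^sub>0 e\<^sub>1 (x # xs) = e\<^sub>1 # x # enc_list e\<^sub>0 e\<^sub>1 xs"

fun enc_lists :: "'a \<Rightarrow> 'a \<Rightarrow> 'a list list \<Rightarrow> 'a list" where
  "enc_lists e\<^sub>0 e\<^sub>1 [] = [e\<^sub>0]"
| "enc_lists e\<^sub>0 e\<^sub>1 (u # us) = e\<^sub>1 # enc_list e\<^sub>0 e\<^sub>1 u @ enc_lists e\<^sub>0 e\<^sub>1 us"

definition henkin_name :: "'a \<Rightarrow> 'a \<Rightarrow> 'a list list \<Rightarrow> 'a \<Rightarrow> 'a list" where
  "henkin_name e\<^sub>0 e\<^sub>1 us r = e\<^sub>0 # r # enc_lists e\<^sub>0 e\<^sub>1 us"

definition base_name :: "'a \<Rightarrow> 'a \<Rightarrow> nat \<Rightarrow> 'a \<Rightarrow> 'a \<Rightarrow> nat \<Rightarrow> 'a list" where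
  "base_name e\<^sub>0 e\<^sub>1 n a a' i = e\<^sub>1 # a # a' # replicate n e\<^sub>1 @ e\<^sub>0 # replicate i e\<^sub>1"

lemma enc_list_append_inj:
  "e\<^sub>0 \<noteq> e\<^sub>1 \<Longrightarrow> enc_list e\<^sub>0 e\<^sub>1 u @ xs = enc_list e\<^sub>0 e\<^sub>1 u' @ xs' \<Longrightarrow> u = u' \<and> xs = xs'"
proof (induction u arbitrary: u')
  case Nil
  then show ?case by (cases u') auto
next
  case (Cons x u)
  then show ?case by (cases u') auto
qed

lemma enc_lists_inj: "e\<^sub>0 \<noteq> e\<^sub>1 \<Longrightarrow> enc_lists e\<^sub>0 e\<^sub>1 us = enc_lists e\<^sub>0 e\<^sub>1 us' \<Longrightarrow> us = us'"
proof (induction us arbitrary: us')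
  case Nil
  then show ?case by (cases us') auto
next
  case (Cons u us)
  then show ?case
    by (cases us') (auto dest: enc_list_append_inj[OF Cons.prems(1)])
qed

lemma henkin_name_inj:
  "e\<^sub>0 \<noteq> e\<^sub>1 \<Longrightarrow> henkin_name e\<^sub>0 e\<^sub>1 us r = henkin_name e\<^sub>0 e\<^sub>1 us' r' \<Longrightarrow> us = us' \<and> r = r'"
  unfolding henkin_name_def using enc_lists_inj by fastforce

lemma length_enc_list: "length u < length (enc_list e\<^sub>0 e\<^sub>1 u)"
  by (induction u) auto

lemma length_lt_enc_lists: "u \<in> set us \<Longrightarrow> length u < length (enc_lists e\<^sub>0 e\<^sub>1 us)"
proof (induction us)
  case (Cons v us)
  then show ?case using length_enc_list[of v e\<^sub>0 e\<^sub>1] by auto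
qed simp

lemma length_lt_henkin_name: "u \<in> set us \<Longrightarrow> length u < length (henkin_name e\<^sub>0 e\<^sub>1 us r)"
  unfolding henkin_name_def using length_lt_enc_lists[of u us e\<^sub>0 e\<^sub>1] by simp

lemma replicate_append_Cons_inj:
  "x \<noteq> y \<Longrightarrow> replicate n x @ y # xs = replicate m x @ y # ys \<Longrightarrow> n = m \<and> xs = ys"
proof (induction n arbitrary: m)
  case 0
  then show ?case by (cases m) auto
next
  case (Suc n)
  then show ?case by (cases m) auto
qed

lemma base_name_inj:
  "e\<^sub>0 \<noteq> e\<^sub>1 \<Longrightarrow> base_name e\<^sub>0 e\<^sub>1 n a a' i = base_name e\<^sub>0 e\<^sub>1 m b b' j \<Longrightarrow> n = m \<and> a = b \<and> a' = b' \<and> i = j"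
  unfolding base_name_def using replicate_append_Cons_inj[of e\<^sub>1 e\<^sub>0 n "replicate i e\<^sub>1" m "replicate j e\<^sub>1"]
  by auto

lemma henkin_name_neq_base_name: "e\<^sub>0 \<noteq> e\<^sub>1 \<Longrightarrow> henkin_name e\<^sub>0 e\<^sub>1 us r \<noteq> base_name e\<^sub>0 e\<^sub>1 n a a' i"
  unfolding henkin_name_def base_name_def by simp

locale pe_almost_morphism = positive_existential_algebra L
  for L :: "'a pe_alg" +
  fixes W :: "'w set" and \<phi> :: "nat \<Rightarrow> 'a \<Rightarrow> 'w list set"
  assumes almost_morphism: "almost_morphism L W \<phi>"
begin

lemma phi_subset_tuples: "a \<in> car L n \<Longrightarrow> \<phi> n a \<subseteq> tuples W n"
  and phi_sb: "\<alpha> \<in> substs n k \<Longrightarrow> a \<in> car L n \<Longrightarrow>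
    \<phi> k (sb L n k \<alpha> a) = {xs \<in> tuples W k. subst_tuple n \<alpha> xs \<in> \<phi> n a}"
  and phi_zr: "\<phi> n (zr L n) = {}"
  and phi_on: "\<phi> n (on L n) = tuples W n"
  and phi_jn: "a \<in> car L n \<Longrightarrow> b \<in> car L n \<Longrightarrow> \<phi> n (jn L n a b) = \<phi> n a \<union> \<phi> n b"
  and phi_mt: "a \<in> car L n \<Longrightarrow> b \<in> car L n \<Longrightarrow> \<phi> n (mt L n a b) = \<phi> n a \<inter> \<phi> n b"
  and phi_ex: "r \<in> car L (Suc n) \<Longrightarrow>
    {xs \<in> tuples W n. \<exists>y\<in>W. xs @ [y] \<in> \<phi> (Suc n) r} \<subseteq> \<phi> n (ex L n r)"
  using almost_morphism unfolding almost_morphism_def hom_base_def A_simps by auto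

lemma zr_neq_on: "zr L 0 \<noteq> on L 0"
  using phi_zr[of 0] phi_on[of 0] by auto

lemma prime_filter_of_tuple: "xs \<in> tuples W n \<Longrightarrow> sort.prime_filter n {a \<in> car L n. xs \<in> \<phi> n a}"
  unfolding sort.prime_filter_def using phi_zr phi_on phi_jn phi_mt by auto

lemma tuple_in_ex_on: "xs \<in> tuples W n \<Longrightarrow> y \<in> W \<Longrightarrow> xs \<in> \<phi> n (ex L n (on L (Suc n)))"
  using phi_ex[OF on_closed, of n] phi_on[of "Suc n"] unfolding tuples_def by auto

end

text \<open>The assumption says that \<open>\<phi>\<close> validates the sentence \<open>\<exists>x. \<top>\<close>.\<close>

locale pe_almost_morphism_inhabited = pe_almost_morphism L W \<phi>
  for L :: "'a pe_alg" and W :: "'w set" and \<phi> +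
  assumes inhabited: "[] \<in> \<phi> 0 (ex L 0 (on L 1))"
begin

abbreviation hname :: "'a list list \<Rightarrow> 'a \<Rightarrow> 'a list" where
  "hname \<equiv> henkin_name (zr L 0) (on L 0)"

abbreviation bname :: "nat \<Rightarrow> 'a \<Rightarrow> 'a \<Rightarrow> nat \<Rightarrow> 'a list" where
  "bname \<equiv> base_name (zr L 0) (on L 0)"

definition separated :: "(nat \<times> 'a \<times> 'a) set" where
  "separated = {(n, a, a'). a \<in> car L n \<and> a' \<in> car L n \<and> \<phi> n a \<noteq> \<phi> n a'}"

definition separating_tuple :: "nat \<Rightarrow> 'a \<Rightarrow> 'a \<Rightarrow> 'w list" where
  "separating_tuple n a a' = (SOME w. w \<in> tuples W n \<and> (w \<in> \<phi> n a \<longleftrightarrow> w \<notin> \<phi> n a'))"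

definition base_names :: "'a list set" where
  "base_names = {bname n a a' i | n a a' i. (n, a, a') \<in> separated \<and> i < n}"

definition base_value :: "'a list \<Rightarrow> 'w" where
  "base_value x = (THE w. \<exists>n a a' i. x = bname n a a' i \<and> w = separating_tuple n a a' ! i)"

definition base_tuple :: "nat \<Rightarrow> 'a \<Rightarrow> 'a \<Rightarrow> 'a list list" where
  "base_tuple n a a' = map (bname n a a') [0..<n]"

lemma separating_tuple:
  assumes "(n, a, a') \<in> separated"
  shows "separating_tuple n a a' \<in> tuples W n"
    and "separating_tuple n a a' \<in> \<phi> n a \<longleftrightarrow> separating_tuple n a a' \<notin> \<phi> n a'"
proof -
  have "\<exists>w. w \<in> tuples W n \<and> (w \<in> \<phi> n a \<longleftrightarrow> w \<notin> \<phi> n a')"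
    using assms phi_subset_tuples unfolding separated_def by blast
  from someI_ex[OF this] show "separating_tuple n a a' \<in> tuples W n"
    and "separating_tuple n a a' \<in> \<phi> n a \<longleftrightarrow> separating_tuple n a a' \<notin> \<phi> n a'"
    unfolding separating_tuple_def by blast+
qed

lemma base_value_bname: "base_value (bname n a a' i) = separating_tuple n a a' ! i"
  unfolding base_value_def
  by (rule the_equality) (use base_name_inj[OF zr_neq_on] in blast)+

lemma base_value_in_W: "x \<in> base_names \<Longrightarrow> base_value x \<in> W"
  unfolding base_names_def using separating_tuple(1) base_value_bname
  by (fastforce simp: tuples_def)

lemma set_base_tuple: "(n, a, a') \<in> separated \<Longrightarrow> set (base_tuple n a a') \<subseteq> base_names"
  unfolding base_tuple_def base_names_def by fastforce

lemma length_base_tuple [simp]: "length (base_tuple n a a') = n"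
  unfolding base_tuple_def by simp

lemma map_base_value_base_tuple:
  "(n, a, a') \<in> separated \<Longrightarrow> map base_value (base_tuple n a a') = separating_tuple n a a'"
  using separating_tuple(1) unfolding base_tuple_def tuples_def
  by (intro nth_equalityI) (auto simp: base_value_bname)

lemma hname_notin_base_names: "hname us r \<notin> base_names"
  unfolding base_names_def using henkin_name_neq_base_name[OF zr_neq_on] by auto

end

locale finite_stage = pe_almost_morphism_inhabited +
  fixes N :: "'a list set"
  assumes finite_N: "finite N"
begin

definition base_list :: "'a list list" where
  "base_list = (SOME xs. distinct xs \<and> set xs = N \<inter> base_names)"

definition henkin_list :: "'a list list" where
  "henkin_list = sort_key length (SOME xs. distinct xs \<and> set xs = N - base_names)"

definition names :: "'a list list" where
  "names = base_list @ henkin_list"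

abbreviation nbase :: nat where
  "nbase \<equiv> length base_list"

abbreviation nnames :: nat where
  "nnames \<equiv> length names"

definition pos :: "'a list \<Rightarrow> nat" where
  "pos x = (LEAST i. names ! i = x)"

text \<open>Reads a formula about the tuple \<open>us\<close> as a formula about the tuple \<open>names\<close>.\<close>

definition pos_subst :: "'a list list \<Rightarrow> nat \<Rightarrow> nat" where
  "pos_subst us = restrict (\<lambda>i. Suc (pos (us ! (i - 1)))) {1..length us}"

definition base_filter :: "'a set" where
  "base_filter = {a \<in> car L nbase. map base_value base_list \<in> \<phi> nbase a}"

definition henkin_args :: "'a list \<Rightarrow> 'a list list \<times> 'a" where
  "henkin_args c = (SOME (us, r). c = hname us r)"

definition henkin_request :: "nat \<Rightarrow> 'a set \<Rightarrow> 'a" where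
  "henkin_request k P = (case henkin_args (names ! (nbase + k)) of (us, r) \<Rightarrow>
     if names ! (nbase + k) = hname us r \<and> r \<in> car L (Suc (length us)) \<and> (\<forall>x\<in>set us. pos x < nbase + k)
        \<and> sb L (length us) (nbase + k) (pos_subst us) (ex L (length us) r) \<in> P
     then sb L (Suc (length us)) (Suc (nbase + k)) (subst_extend (pos_subst us) (length us) (nbase + k)) r
     else on L (Suc (nbase + k)))"

primrec stage :: "nat \<Rightarrow> 'a set" where
  "stage 0 = base_filter"
| "stage (Suc k) = (SOME Q. sort.prime_filter (Suc (nbase + k)) Q \<and>
     (\<forall>a\<in>car L (nbase + k). a \<in> stage k \<longleftrightarrow> cylinder (nbase + k) a \<in> Q) \<and> henkin_request k (stage k) \<in> Q)"

definition holds :: "'a list list \<times> 'a \<Rightarrow> bool" where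
  "holds = (\<lambda>(us, a). sb L (length us) (Suc nnames) (pos_subst us) a \<in> stage (Suc nnames - nbase))"

declare stage.simps(2) [simp del]

lemma base_list: "distinct base_list" "set base_list = N \<inter> base_names"
proof -
  have "\<exists>xs. distinct xs \<and> set xs = N \<inter> base_names"
    using finite_N finite_distinct_list by blast
  from someI_ex[OF this] show "distinct base_list" "set base_list = N \<inter> base_names"
    unfolding base_list_def by blast+
qed

lemma henkin_list: "distinct henkin_list" "set henkin_list = N - base_names" "sorted (map length henkin_list)"
proof -
  have "\<exists>xs. distinct xs \<and> set xs = N - base_names"
    using finite_N finite_distinct_list by blast
  from someI_ex[OF this] show "distinct henkin_list" "set henkin_list = N - base_names"
    "sorted (map length henkin_list)"
    unfolding henkin_list_def by simp_all
qed

lemma distinct_names: "distinct names" and set_names: "set names = N"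
  using base_list henkin_list unfolding names_def by auto

lemma pos_nth:
  assumes "i < nnames"
  shows "pos (names ! i) = i"
  unfolding pos_def
proof (rule Least_equality)
  show "i \<le> j" if "names ! j = names ! i" for j
  proof (cases "j < nnames")
    case True
    then show ?thesis using nth_eq_iff_index_eq[OF distinct_names True assms] that by simp
  qed (use assms in simp)
qed simp

lemma pos_in_names: "x \<in> N \<Longrightarrow> pos x < nnames \<and> names ! pos x = x"
  using pos_nth set_names by (metis in_set_conv_nth)

lemma pos_base_list: "x \<in> set base_list \<Longrightarrow> pos x < nbase \<and> base_list ! pos x = x"
  using pos_nth unfolding names_def by (metis in_set_conv_nth length_append nth_append trans_less_add1)

lemma pos_henkin_list: "i < length henkin_list \<Longrightarrow> pos (henkin_list ! i) = nbase + i"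
  using pos_nth[of "nbase + i"] unfolding names_def by simp

lemma pos_subst_substs: "\<forall>x\<in>set us. pos x < j \<Longrightarrow> pos_subst us \<in> substs (length us) j"
  unfolding substs_def pos_subst_def by (auto simp: Suc_le_eq)

lemma pos_subst_substs_names: "set us \<subseteq> N \<Longrightarrow> pos_subst us \<in> substs (length us) (Suc nnames)"
  using pos_subst_substs pos_in_names less_SucI by blast

lemma base_tuple_in_tuples: "map base_value base_list \<in> tuples W nbase"
  using base_list base_value_in_W by (auto simp: tuples_def)

lemma base_filter_prime: "sort.prime_filter nbase base_filter"
  unfolding base_filter_def using prime_filter_of_tuple[OF base_tuple_in_tuples] by simp

lemma ex_on_in_base_filter: "ex L nbase (on L (Suc nbase)) \<in> base_filter"
proof (cases "base_list = []")
  case True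
  then show ?thesis using inhabited unfolding base_filter_def by simp
next
  case False
  then obtain x where "x \<in> set base_list" by (cases base_list) auto
  then have "base_value x \<in> W" using base_list base_value_in_W by blast
  then show ?thesis unfolding base_filter_def using tuple_in_ex_on[OF base_tuple_in_tuples] by simp
qed

lemma henkin_request:
  assumes "ex L (nbase + k) (on L (Suc (nbase + k))) \<in> P"
  shows "henkin_request k P \<in> car L (Suc (nbase + k)) \<and> ex L (nbase + k) (henkin_request k P) \<in> P"
proof -
  obtain us r where args: "henkin_args (names ! (nbase + k)) = (us, r)" by fastforce
  show ?thesis
  proof (cases "names ! (nbase + k) = hname us r \<and> r \<in> car L (Suc (length us))
       \<and> (\<forall>x\<in>set us. pos x < nbase + k) \<and> sb L (length us) (nbase + k) (pos_subst us) (ex L (length us) r) \<in> P")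
    case True
    then have \<sigma>: "pos_subst us \<in> substs (length us) (nbase + k)" using pos_subst_substs by blast
    have "henkin_request k P = sb L (Suc (length us)) (Suc (nbase + k)) (subst_extend (pos_subst us) (length us) (nbase + k)) r"
      unfolding henkin_request_def args prod.case by (rule if_P[OF True])
    then show ?thesis using True ex_sb_subst_extend[OF \<sigma>] subst_extend_substs[OF \<sigma>] by simp
  next
    case False
    have "henkin_request k P = on L (Suc (nbase + k))"
      unfolding henkin_request_def args prod.case by (rule if_not_P[OF False])
    then show ?thesis using assms by simp
  qed
qed

lemma stage_Suc:
  assumes "sort.prime_filter (nbase + k) (stage k)" and "ex L (nbase + k) (on L (Suc (nbase + k))) \<in> stage k"
  shows "sort.prime_filter (Suc (nbase + k)) (stage (Suc k))"
    and "\<And>a. a \<in> car L (nbase + k) \<Longrightarrow> a \<in> stage k \<longleftrightarrow> cylinder (nbase + k) a \<in> stage (Suc k)"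
    and "henkin_request k (stage k) \<in> stage (Suc k)"
proof -
  have "\<exists>Q. sort.prime_filter (Suc (nbase + k)) Q \<and>
      (\<forall>a\<in>car L (nbase + k). a \<in> stage k \<longleftrightarrow> cylinder (nbase + k) a \<in> Q) \<and> henkin_request k (stage k) \<in> Q"
    using prime_filter_lift[OF assms(1)] henkin_request[OF assms(2)] by blast
  then have "sort.prime_filter (Suc (nbase + k)) (stage (Suc k)) \<and>
      (\<forall>a\<in>car L (nbase + k). a \<in> stage k \<longleftrightarrow> cylinder (nbase + k) a \<in> stage (Suc k)) \<and>
      henkin_request k (stage k) \<in> stage (Suc k)"
    unfolding stage.simps(2) by (rule someI_ex)
  then show "sort.prime_filter (Suc (nbase + k)) (stage (Suc k))"
    and "\<And>a. a \<in> car L (nbase + k) \<Longrightarrow> a \<in> stage k \<longleftrightarrow> cylinder (nbase + k) a \<in> stage (Suc k)"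
    and "henkin_request k (stage k) \<in> stage (Suc k)"
    by blast+
qed

lemma stage_invariant:
  "sort.prime_filter (nbase + k) (stage k) \<and> ex L (nbase + k) (on L (Suc (nbase + k))) \<in> stage k"
proof (induction k)
  case 0
  then show ?case using base_filter_prime ex_on_in_base_filter by simp
next
  case (Suc k)
  then have "cylinder (nbase + k) (ex L (nbase + k) (on L (Suc (nbase + k)))) \<in> stage (Suc k)"
    using stage_Suc(2)[of k "ex L (nbase + k) (on L (Suc (nbase + k)))"] by simp
  then show ?case using stage_Suc(1) Suc ex_on_cylinder by simp
qed

lemmas stage_prime_filter = stage_invariant[THEN conjunct1]
  and stage_cylinder = stage_Suc(2)[OF stage_invariant[THEN conjunct1] stage_invariant[THEN conjunct2]]
  and henkin_request_in_stage = stage_Suc(3)[OF stage_invariant[THEN conjunct1] stage_invariant[THEN conjunct2]]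

lemma stage_incl:
  assumes "k < k'" and a: "a \<in> car L (nbase + k)"
  shows "a \<in> stage k \<longleftrightarrow> sb L (nbase + k) (nbase + k') (restrict id {1..nbase + k}) a \<in> stage k'"
  using assms(1)
proof (induction k')
  case (Suc k')
  show ?case
  proof (cases "k = k'")
    case True
    then show ?thesis using stage_cylinder[OF a] unfolding cyl_def by (simp only: add_Suc_right)
  next
    case False
    then have "k < k'" using Suc.prems by simp
    define i where "i = restrict id {1..nbase + k}"
    have incl: "i \<in> substs (nbase + k) (nbase + k')"
      unfolding i_def using incl_substs \<open>k < k'\<close> by simp
    have "compose {1..nbase + k} (cyl (nbase + k')) i = i"
      unfolding i_def using \<open>k < k'\<close> by (auto simp: compose_def cyl_def fun_eq_iff)
    then have i_Suc: "sb L (nbase + k) (Suc (nbase + k')) i a = cylinder (nbase + k') (sb L (nbase + k) (nbase + k') i a)"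
      using sb_compose[OF incl cyl_substs a] by simp
    have "a \<in> stage k \<longleftrightarrow> sb L (nbase + k) (nbase + k') i a \<in> stage k'"
      unfolding i_def by (rule Suc.IH[OF \<open>k < k'\<close>])
    also have "\<dots> \<longleftrightarrow> cylinder (nbase + k') (sb L (nbase + k) (nbase + k') i a) \<in> stage (Suc k')"
      by (rule stage_cylinder) (use incl a in simp)
    also have "\<dots> \<longleftrightarrow> sb L (nbase + k) (Suc (nbase + k')) i a \<in> stage (Suc k')"
      by (simp only: i_Suc)
    finally show ?thesis unfolding i_def by (simp only: add_Suc_right)
  qed
qed simp

lemma sb_pos_subst_incl:
  assumes "\<forall>x\<in>set us. pos x < j" and "j \<le> j'" and "a \<in> car L (length us)"
  shows "sb L (length us) j' (pos_subst us) a = sb L j j' (restrict id {1..j}) (sb L (length us) j (pos_subst us) a)"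
proof -
  have \<sigma>: "pos_subst us \<in> substs (length us) j" using pos_subst_substs assms(1) by blast
  have "compose {1..length us} (restrict id {1..j}) (pos_subst us) = pos_subst us"
    using substs_apply[OF \<sigma>] by (auto simp: compose_def pos_subst_def fun_eq_iff)
  then show ?thesis using sb_compose[OF \<sigma> incl_substs[OF assms(2)] assms(3)] by simp
qed

text \<open>The final stage is taken one step beyond \<open>nnames - nbase\<close>, so that \<open>stage_incl\<close>, which
  needs a strict inequality, applies to every intermediate stage.\<close>

lemma holds_iff_stage:
  assumes "\<forall>x\<in>set us. pos x < j" and "nbase \<le> j" "j \<le> nnames" and a: "a \<in> car L (length us)"
  shows "holds (us, a) \<longleftrightarrow> sb L (length us) j (pos_subst us) a \<in> stage (j - nbase)"
proof -
  have \<sigma>: "pos_subst us \<in> substs (length us) j" using pos_subst_substs assms(1) by blast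
  have "holds (us, a) \<longleftrightarrow>
      sb L j (Suc nnames) (restrict id {1..j}) (sb L (length us) j (pos_subst us) a) \<in> stage (Suc nnames - nbase)"
    unfolding holds_def using sb_pos_subst_incl[OF assms(1) _ a, of "Suc nnames"] assms(3) by simp
  also have "\<dots> \<longleftrightarrow> sb L (length us) j (pos_subst us) a \<in> stage (j - nbase)"
    using stage_incl[of "j - nbase" "Suc nnames - nbase"] assms \<sigma> by simp
  finally show ?thesis .
qed

lemma nbase_le_nnames: "nbase \<le> nnames"
  unfolding names_def by simp

lemma holds_lattice:
  assumes us: "set us \<subseteq> N" and a: "a \<in> car L (length us)" and b: "b \<in> car L (length us)"
  shows "holds (us, mt L (length us) a b) \<longleftrightarrow> holds (us, a) \<and> holds (us, b)"
    and "holds (us, jn L (length us) a b) \<longleftrightarrow> holds (us, a) \<or> holds (us, b)"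
    and "holds (us, on L (length us))" and "\<not> holds (us, zr L (length us))"
proof -
  have \<sigma>: "pos_subst us \<in> substs (length us) (Suc nnames)" using pos_subst_substs_names[OF us] .
  have P: "sort.prime_filter (Suc nnames) (stage (Suc nnames - nbase))"
    using stage_prime_filter[of "Suc nnames - nbase"] nbase_le_nnames by simp
  show "holds (us, mt L (length us) a b) \<longleftrightarrow> holds (us, a) \<and> holds (us, b)"
    and "holds (us, jn L (length us) a b) \<longleftrightarrow> holds (us, a) \<or> holds (us, b)"
    and "holds (us, on L (length us))" and "\<not> holds (us, zr L (length us))"
    using P \<sigma> a b unfolding holds_def sort.prime_filter_def
    by (simp_all add: sb_mt sb_jn sb_on sb_zr)
qed

lemma pos_subst_subst_tuple:
  assumes "\<alpha> \<in> substs n (length us)"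
  shows "pos_subst (subst_tuple n \<alpha> us) = compose {1..n} (pos_subst us) \<alpha>"
proof
  fix i
  show "pos_subst (subst_tuple n \<alpha> us) i = compose {1..n} (pos_subst us) \<alpha> i"
  proof (cases "i \<in> {1..n}")
    case True
    then have "\<alpha> i \<in> {1..length us}" using substs_apply[OF assms] by blast
    moreover have "i - 1 < n" "Suc (i - 1) = i" using True by auto
    then have "subst_tuple n \<alpha> us ! (i - 1) = us ! (\<alpha> i - 1)"
      using nth_subst_tuple[of "i - 1" n \<alpha> us] by simp
    ultimately show ?thesis using True unfolding pos_subst_def compose_def by simp
  qed (auto simp: pos_subst_def compose_def)
qed

lemma holds_sb:
  assumes us: "set us \<subseteq> N" and \<alpha>: "\<alpha> \<in> substs n (length us)" and a: "a \<in> car L n"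
  shows "holds (us, sb L n (length us) \<alpha> a) \<longleftrightarrow> holds (subst_tuple n \<alpha> us, a)"
  unfolding holds_def
  using sb_compose[OF \<alpha> pos_subst_substs_names[OF us] a] pos_subst_subst_tuple[OF \<alpha>] by simp

lemma subst_tuple_pos_subst:
  assumes "\<forall>x\<in>set us. pos x < length xs \<and> xs ! pos x = x"
  shows "subst_tuple (length us) (pos_subst us) (map f xs) = map f us"
proof (rule nth_equalityI)
  fix i assume "i < length (subst_tuple (length us) (pos_subst us) (map f xs))"
  then have "i < length us" by simp
  then have "pos (us ! i) < length xs" "xs ! pos (us ! i) = us ! i" using assms by auto
  then show "subst_tuple (length us) (pos_subst us) (map f xs) ! i = map f us ! i"
    using \<open>i < length us\<close> by (simp add: nth_subst_tuple pos_subst_def)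
qed simp

lemma holds_base:
  assumes us: "set us \<subseteq> N \<inter> base_names" and a: "a \<in> car L (length us)"
  shows "holds (us, a) \<longleftrightarrow> map base_value us \<in> \<phi> (length us) a"
proof -
  have pos: "\<forall>x\<in>set us. pos x < nbase \<and> base_list ! pos x = x"
    using pos_base_list base_list(2) us by blast
  then have \<sigma>: "pos_subst us \<in> substs (length us) nbase"
    using pos_subst_substs by blast
  have "holds (us, a) \<longleftrightarrow> sb L (length us) nbase (pos_subst us) a \<in> base_filter"
    using holds_iff_stage[of us nbase a] pos a nbase_le_nnames by simp
  also have "\<dots> \<longleftrightarrow> subst_tuple (length us) (pos_subst us) (map base_value base_list) \<in> \<phi> (length us) a"
    using \<sigma> a phi_sb[OF \<sigma> a] base_tuple_in_tuples by (simp add: base_filter_def)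
  also have "subst_tuple (length us) (pos_subst us) (map base_value base_list) = map base_value us"
    using subst_tuple_pos_subst pos by blast
  finally show ?thesis .
qed

lemma henkin_args_hname: "henkin_args (hname us r) = (us, r)"
proof -
  have "hname us r = hname (fst (henkin_args (hname us r))) (snd (henkin_args (hname us r)))"
    unfolding henkin_args_def by (rule someI2[of _ "(us, r)"]) auto
  then show ?thesis using henkin_name_inj[OF zr_neq_on] by (metis prod.collapse)
qed

lemma henkin_name_position:
  assumes "hname us r \<in> N"
  obtains k where "k < length henkin_list" "henkin_list ! k = hname us r" "pos (hname us r) = nbase + k"
proof -
  have "hname us r \<in> set henkin_list" using assms henkin_list(2) hname_notin_base_names by blast
  then obtain k where k: "k < length henkin_list" "henkin_list ! k = hname us r"
    by (auto simp: in_set_conv_nth)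
  moreover have "pos (hname us r) = nbase + k" using pos_henkin_list[OF k(1)] k(2) by simp
  ultimately show ?thesis by (rule that)
qed

text \<open>Names occurring in the arguments of a Henkin name are shorter than it, hence enumerated
  earlier.\<close>

lemma pos_lt_pos_hname:
  assumes us: "set us \<subseteq> N" and c: "hname us r \<in> N" and x: "x \<in> set us"
  shows "pos x < pos (hname us r)"
proof -
  obtain k where k: "k < length henkin_list" "henkin_list ! k = hname us r" "pos (hname us r) = nbase + k"
    using henkin_name_position[OF c] .
  show ?thesis
  proof (cases "x \<in> base_names")
    case True
    then have "pos x < nbase" using pos_base_list base_list(2) us x by blast
    then show ?thesis using k(3) by simp
  next
    case False
    then have "x \<in> set henkin_list" using henkin_list(2) us x by blast
    then obtain i where i: "i < length henkin_list" "henkin_list ! i = x"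
      by (auto simp: in_set_conv_nth)
    have "\<not> k \<le> i"
    proof
      assume "k \<le> i"
      then have "length (henkin_list ! k) \<le> length (henkin_list ! i)"
        using sorted_nth_mono[OF henkin_list(3), of k i] i(1) by simp
      then show False using length_lt_henkin_name[OF x, of "zr L 0" "on L 0" r] i(2) k(2) by simp
    qed
    then show ?thesis using pos_henkin_list[OF i(1)] i(2) k(3) by simp
  qed
qed

lemma pos_subst_snoc:
  "pos_subst (us @ [c]) = subst_extend (pos_subst us) (length us) (pos c)"
  unfolding pos_subst_def subst_extend_def by (auto simp: fun_eq_iff nth_append)

lemma holds_henkin:
  assumes us: "set us \<subseteq> N" and r: "r \<in> car L (Suc (length us))" and c: "hname us r \<in> N"
    and ex: "holds (us, ex L (length us) r)"
  shows "holds (us @ [hname us r], r)"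
proof -
  define j where "j = pos (hname us r)"
  have "nbase \<le> j" unfolding j_def by (rule henkin_name_position[OF c]) simp
  then have j: "nbase \<le> j" "j < nnames" "names ! j = hname us r"
    using pos_in_names[OF c] unfolding j_def by auto
  have lt: "\<forall>x\<in>set us. pos x < j" using pos_lt_pos_hname[OF us c] unfolding j_def by blast
  have "sb L (length us) j (pos_subst us) (ex L (length us) r) \<in> stage (j - nbase)"
    using holds_iff_stage[OF lt j(1) less_imp_le[OF j(2)]] ex r by simp
  then have "henkin_request (j - nbase) (stage (j - nbase)) =
      sb L (Suc (length us)) (Suc j) (subst_extend (pos_subst us) (length us) j) r"
    using j lt r unfolding henkin_request_def by (simp add: henkin_args_hname)
  then have "sb L (Suc (length us)) (Suc j) (pos_subst (us @ [hname us r])) r \<in> stage (Suc j - nbase)"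
    using henkin_request_in_stage[of "j - nbase"] j(1) unfolding pos_subst_snoc j_def
    by (simp add: Suc_diff_le)
  moreover have "\<forall>x\<in>set (us @ [hname us r]). pos x < Suc j" using lt j_def by auto
  ultimately show ?thesis using holds_iff_stage[of _ "Suc j"] j r by simp
qed

end

datatype 'a constraint =
  Lattice_constraint "'a list list" 'a 'a
| Subst_constraint "'a list list" nat "nat \<Rightarrow> nat" 'a
| Henkin_constraint "'a list list" 'a
| Base_constraint nat 'a 'a

context pe_almost_morphism_inhabited
begin

definition constraints :: "'a constraint set" where
  "constraints =
     {Lattice_constraint us a b | us a b. a \<in> car L (length us) \<and> b \<in> car L (length us)} \<union>
     {Subst_constraint us n \<alpha> a | us n \<alpha> a. \<alpha> \<in> substs n (length us) \<and> a \<in> car L n} \<union>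
     {Henkin_constraint us r | us r. r \<in> car L (Suc (length us))} \<union>
     {Base_constraint n a a' | n a a'. (n, a, a') \<in> separated}"

fun satisfies :: "'a constraint \<Rightarrow> ('a list list \<times> 'a \<Rightarrow> bool) \<Rightarrow> bool" where
  "satisfies (Lattice_constraint us a b) T \<longleftrightarrow>
     (T (us, mt L (length us) a b) \<longleftrightarrow> T (us, a) \<and> T (us, b)) \<and>
     (T (us, jn L (length us) a b) \<longleftrightarrow> T (us, a) \<or> T (us, b)) \<and>
     T (us, on L (length us)) \<and> \<not> T (us, zr L (length us))"
| "satisfies (Subst_constraint us n \<alpha> a) T \<longleftrightarrow>
     (T (us, sb L n (length us) \<alpha> a) \<longleftrightarrow> T (subst_tuple n \<alpha> us, a))"
| "satisfies (Henkin_constraint us r) T \<longleftrightarrow>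
     (T (us, ex L (length us) r) \<longrightarrow> T (us @ [hname us r], r))"
| "satisfies (Base_constraint n a a') T \<longleftrightarrow>
     (T (base_tuple n a a', a) \<longleftrightarrow> separating_tuple n a a' \<in> \<phi> n a) \<and>
     (T (base_tuple n a a', a') \<longleftrightarrow> separating_tuple n a a' \<in> \<phi> n a')"

fun support :: "'a constraint \<Rightarrow> ('a list list \<times> 'a) set" where
  "support (Lattice_constraint us a b) =
     {(us, mt L (length us) a b), (us, a), (us, b), (us, jn L (length us) a b),
      (us, on L (length us)), (us, zr L (length us))}"
| "support (Subst_constraint us n \<alpha> a) = {(us, sb L n (length us) \<alpha> a), (subst_tuple n \<alpha> us, a)}"
| "support (Henkin_constraint us r) = {(us, ex L (length us) r), (us @ [hname us r], r)}"
| "support (Base_constraint n a a') = {(base_tuple n a a', a), (base_tuple n a a', a')}"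

lemma finite_support: "finite (support c)"
  by (cases c) simp_all

lemma satisfies_local: "(\<And>x. x \<in> support c \<Longrightarrow> T x = T' x) \<Longrightarrow> satisfies c T = satisfies c T'"
  by (cases c) simp_all

lemma finitely_satisfiable:
  assumes F: "F \<subseteq> constraints" "finite F"
  shows "\<exists>T. \<forall>c\<in>F. satisfies c T"
proof -
  define N where "N = (\<Union>c\<in>F. \<Union>x\<in>support c. set (fst x))"
  have "finite N" unfolding N_def using F(2) finite_support by auto
  then interpret finite_stage L W \<phi> N by unfold_locales
  have "satisfies c holds" if c: "c \<in> F" for c
  proof -
    have in_N: "set us \<subseteq> N" if "(us, a) \<in> support c" for us a
      using c that unfolding N_def by fastforce
    show ?thesis
    proof (cases c)
      case (Lattice_constraint us a b)
      then have "set us \<subseteq> N" "a \<in> car L (length us)" "b \<in> car L (length us)"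
        using c F(1) in_N[of us a] unfolding constraints_def by auto
      then show ?thesis using Lattice_constraint holds_lattice by simp
    next
      case (Subst_constraint us n \<alpha> a)
      then have "set us \<subseteq> N" "\<alpha> \<in> substs n (length us)" "a \<in> car L n"
        using c F(1) in_N[of us "sb L n (length us) \<alpha> a"] unfolding constraints_def by auto
      then show ?thesis using Subst_constraint holds_sb by simp
    next
      case (Henkin_constraint us r)
      then have "set us \<subseteq> N" "hname us r \<in> N" "r \<in> car L (Suc (length us))"
        using c F(1) in_N[of "us @ [hname us r]" r] unfolding constraints_def by auto
      then show ?thesis using Henkin_constraint holds_henkin by simp
    next
      case (Base_constraint n a a')
      then have sep: "(n, a, a') \<in> separated" using c F(1) unfolding constraints_def by auto
      then have "set (base_tuple n a a') \<subseteq> N \<inter> base_names"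
        using set_base_tuple in_N[of "base_tuple n a a'" a] Base_constraint by auto
      moreover have "a \<in> car L n" "a' \<in> car L n" using sep unfolding separated_def by auto
      ultimately show ?thesis
        using Base_constraint holds_base map_base_value_base_tuple[OF sep] by simp
    qed
  qed
  then show ?thesis by blast
qed

definition tuple_model :: "('a list list \<times> 'a \<Rightarrow> bool) \<Rightarrow> nat \<Rightarrow> 'a \<Rightarrow> 'a list list set" where
  "tuple_model T n a = {xs \<in> tuples UNIV n. T (xs, a)}"

lemma morphism_tuple_model:
  assumes T: "\<And>c. c \<in> constraints \<Longrightarrow> satisfies c T"
  shows "morphism L UNIV (tuple_model T)"
proof -
  have lattice: "T (xs, mt L n a b) \<longleftrightarrow> T (xs, a) \<and> T (xs, b)" "T (xs, jn L n a b) \<longleftrightarrow> T (xs, a) \<or> T (xs, b)"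
    "T (xs, on L n)" "\<not> T (xs, zr L n)"
    if "length xs = n" "a \<in> car L n" "b \<in> car L n" for xs n a b
    using T[of "Lattice_constraint xs a b"] that unfolding constraints_def by auto
  have subst: "T (xs, sb L n k \<alpha> a) \<longleftrightarrow> T (subst_tuple n \<alpha> xs, a)"
    if "length xs = k" "\<alpha> \<in> substs n k" "a \<in> car L n" for xs n k \<alpha> a
    using T[of "Subst_constraint xs n \<alpha> a"] that unfolding constraints_def by auto
  have henkin: "T (xs @ [hname xs r], r)"
    if "length xs = n" "r \<in> car L (Suc n)" "T (xs, ex L n r)" for xs n r
    using T[of "Henkin_constraint xs r"] that unfolding constraints_def by auto
  have "hom_base L UNIV (tuple_model T)"
    unfolding hom_base_def A_simps tuple_model_def tuples_UNIV
    using lattice[OF _ zr_closed zr_closed] lattice subst by auto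
  moreover have "ex (A UNIV) n (tuple_model T (Suc n) r) = tuple_model T n (ex L n r)"
    if r: "r \<in> car L (Suc n)" for n r
  proof
    show "ex (A UNIV) n (tuple_model T (Suc n) r) \<subseteq> tuple_model T n (ex L n r)"
    proof
      fix xs assume "xs \<in> ex (A UNIV) n (tuple_model T (Suc n) r)"
      then obtain y where xs: "length xs = n" and y: "T (xs @ [y], r)"
        unfolding A_simps tuple_model_def tuples_UNIV by auto
      have c: "cylinder n (ex L n r) \<in> car L (Suc n)" using r cyl_substs by simp
      have "r = mt L (Suc n) r (cylinder n (ex L n r))"
        using leq_cylinder_ex[OF r] unfolding sort.leq_def .
      then have "T (xs @ [y], cylinder n (ex L n r))" using lattice(1)[OF _ r c, where xs="xs @ [y]"] xs y by simp
      then show "xs \<in> tuple_model T n (ex L n r)"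
        using subst[where xs="xs @ [y]" and k="Suc n" and n=n and \<alpha>="cyl n" and a="ex L n r"] subst_tuple_cyl[OF xs] xs r cyl_substs
        unfolding tuple_model_def tuples_UNIV by simp
    qed
    show "tuple_model T n (ex L n r) \<subseteq> ex (A UNIV) n (tuple_model T (Suc n) r)"
      unfolding A_simps tuple_model_def tuples_UNIV using henkin r by fastforce
  qed
  ultimately show ?thesis unfolding morphism_def by blast
qed

lemma ker_tuple_model:
  assumes T: "\<And>c. c \<in> constraints \<Longrightarrow> satisfies c T"
  shows "ker L (tuple_model T) \<subseteq> ker L \<phi>"
proof
  fix x assume "x \<in> ker L (tuple_model T)"
  then obtain n a a' where x: "x = (n, a, a')" "a \<in> car L n" "a' \<in> car L n"
    and eq: "tuple_model T n a = tuple_model T n a'"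
    unfolding ker_def by auto
  show "x \<in> ker L \<phi>"
  proof (rule ccontr)
    assume "x \<notin> ker L \<phi>"
    then have sep: "(n, a, a') \<in> separated" using x unfolding ker_def separated_def by auto
    have "base_tuple n a a' \<in> tuple_model T n a \<longleftrightarrow> base_tuple n a a' \<in> tuple_model T n a'"
      using eq by simp
    then have "T (base_tuple n a a', a) \<longleftrightarrow> T (base_tuple n a a', a')"
      unfolding tuple_model_def tuples_UNIV by simp
    then show False
      using T[of "Base_constraint n a a'"] sep separating_tuple(2)[OF sep] unfolding constraints_def by auto
  qed
qed

lemma morphism_exists_inhabited:
  "\<exists>(W' :: 'a list set) (\<psi> :: nat \<Rightarrow> 'a \<Rightarrow> 'a list list set). morphism L W' \<psi> \<and> ker L \<psi> \<subseteq> ker L \<phi>"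
proof -
  obtain T where "\<And>c. c \<in> constraints \<Longrightarrow> satisfies c T"
    using propositional_compactness[of constraints support satisfies]
      finite_support satisfies_local finitely_satisfiable by blast
  then show ?thesis using morphism_tuple_model ker_tuple_model by blast
qed

end

context pe_almost_morphism
begin

text \<open>If \<open>\<phi>\<close> refutes \<open>\<exists>x. \<top>\<close>, then \<open>W\<close> is empty, so \<open>\<phi>\<close> carries information only in
  sort 0, which the empty domain can represent as well.\<close>

definition sort0_model :: "nat \<Rightarrow> 'a \<Rightarrow> 'a list list set" where
  "sort0_model n a = (if n = 0 \<and> [] \<in> \<phi> 0 a then {[]} else {})"

lemma morphism_sort0_model:
  assumes uninhabited: "[] \<notin> \<phi> 0 (ex L 0 (on L 1))"
  shows "morphism L {} sort0_model"
proof -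
  have "hom_base L {} sort0_model"
    unfolding hom_base_def A_simps
  proof (intro conjI allI ballI)
    fix n k \<alpha> a assume \<alpha>: "\<alpha> \<in> substs n k" and a: "a \<in> car L n"
    show "sort0_model k (sb L n k \<alpha> a) = {xs \<in> tuples {} k. subst_tuple n \<alpha> xs \<in> sort0_model n a}"
    proof (cases "k = 0")
      case True
      then have "n = 0" using substs_apply[OF \<alpha>, of 1] by (cases n) auto
      then show ?thesis
        using True phi_sb[OF \<alpha> a] by (auto simp: sort0_model_def tuples_empty subst_tuple_def)
    qed (simp add: sort0_model_def tuples_empty)
  qed (auto simp: sort0_model_def tuples_empty phi_zr phi_on phi_jn phi_mt)
  moreover have "ex (A {}) n (sort0_model (Suc n) r) = sort0_model n (ex L n r)"
    if r: "r \<in> car L (Suc n)" for n r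
  proof -
    have "[] \<notin> \<phi> 0 (ex L 0 r)" if "n = 0"
    proof -
      have "sort.leq 0 (ex L 0 r) (ex L 0 (on L 1))"
        using ex_mono[OF r on_closed sort.leq_top[OF r]] that by simp
      then have "\<phi> 0 (ex L 0 r) \<subseteq> \<phi> 0 (ex L 0 (on L 1))"
        using phi_mt r that unfolding sort.leq_def by (metis Int_lower2 One_nat_def ex_closed on_closed)
      then show ?thesis using uninhabited by blast
    qed
    then show ?thesis by (auto simp: A_simps sort0_model_def tuples_empty)
  qed
  ultimately show ?thesis unfolding morphism_def by blast
qed

lemma ker_sort0_model:
  assumes uninhabited: "[] \<notin> \<phi> 0 (ex L 0 (on L 1))"
  shows "ker L sort0_model \<subseteq> ker L \<phi>"
proof
  have W: "W = {}"
    using tuple_in_ex_on[of "[]" 0] uninhabited by auto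
  fix x assume "x \<in> ker L sort0_model"
  then obtain n a a' where x: "x = (n, a, a')" "a \<in> car L n" "a' \<in> car L n"
    and eq: "sort0_model n a = sort0_model n a'"
    unfolding ker_def by auto
  have "\<phi> n a = \<phi> n a'"
  proof (cases "n = 0")
    case True
    then have "[] \<in> \<phi> 0 a \<longleftrightarrow> [] \<in> \<phi> 0 a'" using eq unfolding sort0_model_def by (auto split: if_splits)
    moreover have "\<phi> 0 a \<subseteq> {[]}" "\<phi> 0 a' \<subseteq> {[]}"
      using True phi_subset_tuples[OF x(2)] phi_subset_tuples[OF x(3)] by simp_all
    ultimately show ?thesis using True by auto
  next
    case False
    then show ?thesis using phi_subset_tuples[OF x(2)] phi_subset_tuples[OF x(3)] W
      by (simp add: tuples_empty)
  qed
  then show "x \<in> ker L \<phi>" using x unfolding ker_def by auto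
qed

lemma morphism_with_smaller_kernel:
  "\<exists>(W' :: 'a list set) (\<psi> :: nat \<Rightarrow> 'a \<Rightarrow> 'a list list set). morphism L W' \<psi> \<and> ker L \<psi> \<subseteq> ker L \<phi>"
proof (cases "[] \<in> \<phi> 0 (ex L 0 (on L 1))")
  case True
  then interpret pe_almost_morphism_inhabited L W \<phi> by unfold_locales
  show ?thesis by (rule morphism_exists_inhabited)
next
  case False
  then show ?thesis using morphism_sort0_model ker_sort0_model by blast
qed

end

lemma inj_on_if_ker_subset:
  assumes "ker L \<psi> \<subseteq> ker L \<phi>" and "inj_on (\<phi> n) (car L n)"
  shows "inj_on (\<psi> n) (car L n)"
  using assms unfolding ker_def inj_on_def by blast

theorem lemma4p14:
  fixes L :: "'a pe_alg" and W :: "'w set" and \<phi> :: "nat \<Rightarrow> 'a \<Rightarrow> 'w list set"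
  assumes "pe_algebra L"
    and "almost_morphism L W \<phi>"
  shows "\<exists>(Wp :: 'a list set) (\<psi> :: nat \<Rightarrow> 'a \<Rightarrow> 'a list list set).
           morphism L Wp \<psi> \<and> ker L \<psi> \<subseteq> ker L \<phi> \<and>
           ((\<forall>n. inj_on (\<phi> n) (car L n)) \<longrightarrow> (\<forall>n. inj_on (\<psi> n) (car L n)))"
proof -
  interpret pe_almost_morphism L W \<phi>
    using assms by unfold_locales
  show ?thesis
    using morphism_with_smaller_kernel inj_on_if_ker_subset by blast
qed

end
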